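(* Each of the matroids $U_{2,5}$, $U_{3,5}$, $K$ and $K^*$ is an excluded minor for the class $\mathcal{R}$.
   Context: $\mathcal{R}$ is the class of matroids that are binary or can be obtained from a binary matroid by relaxing a circuit-hyperplane (relaxing a circuit-hyperplane $H$ of $M$ means forming the matroid on $E(M)$ whose bases are the bases of $M$ together with $H$). $K$ is the seven-element rank-2 matroid obtained from $U_{2,4}$ by adding one new element in parallel to each of three of its four elements; $K^*$ is its dual. An excluded minor for a minor-closed class is a matroid not in the class all of whose proper minors are in the class. *)

theory Defs
  imports Main
begin

type_synonym 'a matroid = "'a set \<times> 'a set set"

definition ground :: "'a matroid \<Rightarrow> 'a set" where "ground M = fst M"
definition bases :: "'a matroid \<Rightarrow> 'a set set" where "bases M = snd M"

definition is_matroid :: "'a matroid \<Rightarrow> bool" where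
  "is_matroid M \<longleftrightarrow> finite (ground M) \<and> bases M \<subseteq> Pow (ground M) \<and> bases M \<noteq> {} \<and>
     (\<forall>B1\<in>bases M. \<forall>B2\<in>bases M. \<forall>x\<in>B1 - B2.
        \<exists>y\<in>B2 - B1. insert y (B1 - {x}) \<in> bases M)"

definition indep :: "'a matroid \<Rightarrow> 'a set \<Rightarrow> bool" where
  "indep M I \<longleftrightarrow> (\<exists>B\<in>bases M. I \<subseteq> B)"

definition rank :: "'a matroid \<Rightarrow> 'a set \<Rightarrow> nat" where
  "rank M X = Max {card I | I. I \<subseteq> X \<and> indep M I}"

definition circuit :: "'a matroid \<Rightarrow> 'a set \<Rightarrow> bool" where
  "circuit M C \<longleftrightarrow> C \<subseteq> ground M \<and> \<not> indep M C \<and> (\<forall>x\<in>C. indep M (C - {x}))"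

definition hyperplane :: "'a matroid \<Rightarrow> 'a set \<Rightarrow> bool" where
  "hyperplane M H \<longleftrightarrow> H \<subseteq> ground M \<and> rank M H + 1 = rank M (ground M) \<and>
     (\<forall>x\<in>ground M - H. rank M (insert x H) > rank M H)"

definition circuit_hyperplane :: "'a matroid \<Rightarrow> 'a set \<Rightarrow> bool" where
  "circuit_hyperplane M H \<longleftrightarrow> circuit M H \<and> hyperplane M H"

definition relax :: "'a matroid \<Rightarrow> 'a set \<Rightarrow> 'a matroid" where
  "relax M H = (ground M, insert H (bases M))"

definition dual :: "'a matroid \<Rightarrow> 'a matroid" where
  "dual M = (ground M, (\<lambda>B. ground M - B) ` bases M)"

definition delete :: "'a matroid \<Rightarrow> 'a set \<Rightarrow> 'a matroid" where
  "delete M D = (ground M - D,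
     {B. B \<subseteq> ground M - D \<and> indep M B \<and> (\<forall>x\<in>ground M - D - B. \<not> indep M (insert x B))})"

definition contract :: "'a matroid \<Rightarrow> 'a set \<Rightarrow> 'a matroid" where
  "contract M C = dual (delete (dual M) C)"

definition minor :: "'a matroid \<Rightarrow> 'a matroid \<Rightarrow> bool" where
  "minor N M \<longleftrightarrow> (\<exists>C D. C \<subseteq> ground M \<and> D \<subseteq> ground M \<and> C \<inter> D = {} \<and>
                    N = delete (contract M C) D)"

definition proper_minor :: "'a matroid \<Rightarrow> 'a matroid \<Rightarrow> bool" where
  "proper_minor N M \<longleftrightarrow> (\<exists>C D. C \<subseteq> ground M \<and> D \<subseteq> ground M \<and> C \<inter> D = {} \<and>
                    C \<union> D \<noteq> {} \<and> N = delete (contract M C) D)"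

text \<open>Each element e gets a vector phi e
  (coordinates indexed by nat, entries in GF(2) = bool).  A set I is linearly
  independent over GF(2) iff no nonempty subset of I sums to zero.\<close>
definition gf2_indep :: "('a \<Rightarrow> nat \<Rightarrow> bool) \<Rightarrow> 'a set \<Rightarrow> bool" where
  "gf2_indep phi I \<longleftrightarrow> (\<forall>S\<subseteq>I. S \<noteq> {} \<longrightarrow> (\<exists>k. odd (card {e\<in>S. phi e k})))"

definition binary :: "'a matroid \<Rightarrow> bool" where
  "binary M \<longleftrightarrow> (\<exists>phi :: 'a \<Rightarrow> nat \<Rightarrow> bool.
                   \<forall>I\<subseteq>ground M. indep M I \<longleftrightarrow> gf2_indep phi I)"

definition in_R :: "'a matroid \<Rightarrow> bool" where
  "in_R M \<longleftrightarrow> is_matroid M \<and>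
     (binary M \<or> (\<exists>N H. is_matroid N \<and> binary N \<and> circuit_hyperplane N H \<and> M = relax N H))"

definition excluded_minor_R :: "'a matroid \<Rightarrow> bool" where
  "excluded_minor_R M \<longleftrightarrow> is_matroid M \<and> \<not> in_R M \<and> (\<forall>N. proper_minor N M \<longrightarrow> in_R N)"

definition uniform :: "nat \<Rightarrow> nat \<Rightarrow> nat matroid" where
  "uniform r n = ({0..<n}, {B. B \<subseteq> {0..<n} \<and> card B = r})"

text \<open>K: U_{2,4} on {0,1,2,3}, with 4,5,6 added in parallel to 0,1,2 respectively.\<close>
definition Kcls :: "nat \<Rightarrow> nat" where
  "Kcls x = (if x = 4 then 0 else if x = 5 then 1 else if x = 6 then 2 else x)"

definition K :: "nat matroid" where
  "K = ({0..<7}, {{a, b} | a b. a \<in> {0..<7} \<and> b \<in> {0..<7} \<and> Kcls a \<noteq> Kcls b})"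

definition Kstar :: "nat matroid" where
  "Kstar = dual K"

end

theory Submission
  imports Defs
begin

text \<open>All four matroids are, up to duality, rank-2 matroids whose bases are the pairs from
  distinct parallel classes: \<open>U\<^sub>2\<^sub>,\<^sub>5\<close> has five singleton classes and \<open>K\<close> has the classes
  \<open>{0, 4}\<close>, \<open>{1, 5}\<close>, \<open>{2, 6}\<close>, \<open>{3}\<close>.  Allowing loops and arbitrary rank, this family is closed
  under deletion and contraction.  Its members are binary when the rank is at most one or when
  the number of classes exceeds the rank by at most one, and a rank-2 member with four classes, two of
  them singletons \<open>{p}\<close>, \<open>{q}\<close>, is the relaxation of the circuit-hyperplane \<open>{p, q}\<close> of the
  binary matroid in which \<open>p\<close> and \<open>q\<close> are parallel.  This places every proper minor in \<open>R\<close>.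

  Conversely, a matroid in \<open>R\<close> becomes binary after removing at most one basis \<open>H\<close>, and in a
  binary matroid the symmetric difference of two distinct circuits is dependent.  Each of the
  four matroids has, for every basis \<open>H\<close>, two circuits whose one-point deletions and whose
  symmetric difference lie in bases other than \<open>H\<close>.\<close>

section \<open>Deletion, contraction, duality and relaxation\<close>

lemma ground_dual [simp]: "ground (dual M) = ground M"
  by (simp add: dual_def ground_def)

lemma bases_dual: "bases (dual M) = (\<lambda>B. ground M - B) ` bases M"
  by (simp add: dual_def bases_def)

lemma ground_delete [simp]: "ground (delete M D) = ground M - D"
  by (simp add: delete_def ground_def)

lemma bases_delete:
  "bases (delete M D) =
     {B. B \<subseteq> ground M - D \<and> indep M B \<and> (\<forall>x\<in>ground M - D - B. \<not> indep M (insert x B))}"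
  by (simp add: delete_def bases_def)

lemma ground_relax [simp]: "ground (relax M H) = ground M"
  by (simp add: relax_def ground_def)

lemma bases_relax: "bases (relax M H) = insert H (bases M)"
  by (simp add: relax_def bases_def)

lemma matroid_eqI: "ground M = ground N \<Longrightarrow> bases M = bases N \<Longrightarrow> M = N"
  by (simp add: ground_def bases_def prod_eq_iff)

lemma dual_dual:
  assumes "bases M \<subseteq> Pow (ground M)"
  shows "dual (dual M) = M"
proof (rule matroid_eqI)
  have "(\<lambda>B. ground M - (ground M - B)) ` bases M = id ` bases M"
    using assms by (intro image_cong) auto
  then show "bases (dual (dual M)) = bases M"
    by (simp add: bases_dual image_image)
qed simp

lemma delete_dual: "delete (dual M) D = dual (contract M D)"
proof -
  have "bases (delete (dual M) D) \<subseteq> Pow (ground (delete (dual M) D))"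
    by (auto simp: bases_delete)
  then show ?thesis
    by (simp add: contract_def dual_dual)
qed

lemma contract_dual:
  "bases M \<subseteq> Pow (ground M) \<Longrightarrow> contract (dual M) C = dual (delete M C)"
  by (simp add: contract_def dual_dual)

lemma dual_relax: "dual (relax M H) = relax (dual M) (ground M - H)"
  by (rule matroid_eqI) (simp_all add: bases_dual bases_relax)

lemma card_le_of_indep:
  assumes "finite (ground M)" "bases M \<subseteq> Pow (ground M)" "\<And>B. B \<in> bases M \<Longrightarrow> card B = r"
    and "indep M X"
  shows "card X \<le> r"
proof -
  obtain B where "B \<in> bases M" "X \<subseteq> B"
    using \<open>indep M X\<close> unfolding indep_def by blast
  moreover have "finite B"
    using \<open>B \<in> bases M\<close> assms(1,2) finite_subset by blast
  ultimately show ?thesis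
    using assms(3) card_mono by metis
qed

lemma rank_eqI:
  assumes "\<And>J. indep M J \<Longrightarrow> card J \<le> r"
    and "I \<subseteq> X" "indep M I" "\<And>J. J \<subseteq> X \<Longrightarrow> indep M J \<Longrightarrow> card J \<le> card I"
  shows "rank M X = card I"
proof -
  have "{card J | J. J \<subseteq> X \<and> indep M J} \<subseteq> {..r}"
    using assms(1) by auto
  then have "finite {card J | J. J \<subseteq> X \<and> indep M J}"
    by (rule finite_subset) simp
  then show ?thesis
    unfolding rank_def using assms(2-4) by (intro Max_eqI) auto
qed

section \<open>Uniform matroids with parallel classes and loops\<close>

text \<open>The elements of \<open>L\<close> are loops, and two elements of \<open>E - L\<close> are parallel when they
  have the same image under \<open>f\<close>.\<close>

definition parallel_uniform :: "nat set \<Rightarrow> nat set \<Rightarrow> (nat \<Rightarrow> nat) \<Rightarrow> nat \<Rightarrow> nat matroid" where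
  "parallel_uniform E L f r = (E, {B. B \<subseteq> E - L \<and> card B = r \<and> inj_on f B})"

definition num_classes :: "nat set \<Rightarrow> nat set \<Rightarrow> (nat \<Rightarrow> nat) \<Rightarrow> nat" where
  "num_classes E L f = card (f ` (E - L))"

lemma ground_parallel_uniform [simp]: "ground (parallel_uniform E L f r) = E"
  by (simp add: parallel_uniform_def ground_def)

lemma bases_parallel_uniform:
  "bases (parallel_uniform E L f r) = {B. B \<subseteq> E - L \<and> card B = r \<and> inj_on f B}"
  by (simp add: parallel_uniform_def bases_def)

lemma num_classes_empty [simp]: "num_classes {} L f = 0"
  by (simp add: num_classes_def)

lemma bases_parallel_uniform_Pow:
  "bases (parallel_uniform E L f r) \<subseteq> Pow (ground (parallel_uniform E L f r))"
  by (auto simp: bases_parallel_uniform)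

lemma bases_parallel_uniform_2:
  "bases (parallel_uniform E L f 2) = {{a, b} | a b. a \<in> E - L \<and> b \<in> E - L \<and> f a \<noteq> f b}"
proof (intro set_eqI iffI)
  fix B
  assume "B \<in> bases (parallel_uniform E L f 2)"
  then have B: "B \<subseteq> E - L" "card B = 2" "inj_on f B"
    by (auto simp: bases_parallel_uniform)
  then obtain a b where "B = {a, b}" "a \<noteq> b"
    by (meson card_2_iff)
  then show "B \<in> {{a, b} | a b. a \<in> E - L \<and> b \<in> E - L \<and> f a \<noteq> f b}"
    using B by auto
next
  fix B
  assume "B \<in> {{a, b} | a b. a \<in> E - L \<and> b \<in> E - L \<and> f a \<noteq> f b}"
  then obtain a b where "B = {a, b}" "a \<in> E - L" "b \<in> E - L" "f a \<noteq> f b"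
    by blast
  moreover from this have "a \<noteq> b"
    by blast
  ultimately show "B \<in> bases (parallel_uniform E L f 2)"
    by (auto simp: bases_parallel_uniform)
qed

lemma parallel_uniform_extend_to_basis:
  assumes "finite E" and "I \<subseteq> E - L" "inj_on f I" "card I \<le> r"
    and "r \<le> num_classes E L f"
  shows "\<exists>B. I \<subseteq> B \<and> B \<subseteq> E - L \<and> inj_on f B \<and> card B = r"
  using assms(2-4)
proof (induction "r - card I" arbitrary: I)
  case 0
  then show ?case by (intro exI[of _ I]) auto
next
  case (Suc n)
  have "finite I"
    using Suc.prems \<open>finite E\<close> finite_subset by blast
  have "card (f ` I) < card (f ` (E - L))"
    using Suc.hyps(2) assms(5) card_image[OF Suc.prems(2)] unfolding num_classes_def by linarith
  then have "\<not> f ` (E - L) \<subseteq> f ` I"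
    using \<open>finite I\<close> card_mono[of "f ` I" "f ` (E - L)"] by auto
  then obtain e where e: "e \<in> E - L" "f e \<notin> f ` I"
    by auto
  then have "e \<notin> I" by blast
  have "\<exists>B. insert e I \<subseteq> B \<and> B \<subseteq> E - L \<and> inj_on f B \<and> card B = r"
  proof (rule Suc.hyps(1))
    show "n = r - card (insert e I)" "card (insert e I) \<le> r"
      using Suc.hyps(2) \<open>finite I\<close> \<open>e \<notin> I\<close> by simp_all
    show "insert e I \<subseteq> E - L" "inj_on f (insert e I)"
      using Suc.prems e by auto
  qed
  then show ?case by blast
qed

lemma indep_parallel_uniform:
  assumes "finite E" "r \<le> num_classes E L f"
  shows "indep (parallel_uniform E L f r) I \<longleftrightarrow> I \<subseteq> E - L \<and> inj_on f I \<and> card I \<le> r"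
proof
  assume "indep (parallel_uniform E L f r) I"
  then obtain B where B: "B \<subseteq> E - L" "card B = r" "inj_on f B" "I \<subseteq> B"
    unfolding indep_def bases_parallel_uniform by blast
  moreover have "finite B"
    using B \<open>finite E\<close> finite_subset by blast
  ultimately show "I \<subseteq> E - L \<and> inj_on f I \<and> card I \<le> r"
    using card_mono[of B I] inj_on_subset[of f B I] by auto
next
  assume "I \<subseteq> E - L \<and> inj_on f I \<and> card I \<le> r"
  then obtain B where "I \<subseteq> B \<and> B \<subseteq> E - L \<and> inj_on f B \<and> card B = r"
    using parallel_uniform_extend_to_basis[OF assms(1), of I L f r] assms(2) by auto
  then show "indep (parallel_uniform E L f r) I"
    unfolding indep_def bases_parallel_uniform by blast
qed

lemma is_matroid_parallel_uniform:
  assumes "finite E" "r \<le> num_classes E L f"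
  shows "is_matroid (parallel_uniform E L f r)"
  unfolding is_matroid_def
proof (intro conjI ballI)
  let ?M = "parallel_uniform E L f r"
  show "finite (ground ?M)" "bases ?M \<subseteq> Pow (ground ?M)"
    using assms(1) bases_parallel_uniform_Pow by simp_all
  obtain B where "B \<subseteq> E - L \<and> inj_on f B \<and> card B = r"
    using parallel_uniform_extend_to_basis[OF assms(1), of "{}" L f r] assms(2) by auto
  then show "bases ?M \<noteq> {}"
    unfolding bases_parallel_uniform by blast
  fix B1 B2 x
  assume "B1 \<in> bases ?M" "B2 \<in> bases ?M" and x: "x \<in> B1 - B2"
  then have B1: "B1 \<subseteq> E - L" "card B1 = r" "inj_on f B1"
    and B2: "B2 \<subseteq> E - L" "card B2 = r" "inj_on f B2"
    by (auto simp: bases_parallel_uniform)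
  have "finite B1"
    using B1 assms(1) finite_subset by blast
  have "r \<ge> 1"
    using B1 x \<open>finite B1\<close> by (metis DiffD1 card_0_eq empty_iff less_one not_le)
  have "card (f ` (B1 - {x})) = r - 1"
    using B1 x \<open>finite B1\<close> by (simp add: card_image inj_on_diff)
  moreover have "card (f ` B2) = r"
    using B2 card_image by blast
  ultimately have "\<not> f ` B2 \<subseteq> f ` (B1 - {x})"
    using \<open>finite B1\<close> \<open>r \<ge> 1\<close> card_mono[of "f ` (B1 - {x})" "f ` B2"] by auto
  then obtain y where y: "y \<in> B2" "f y \<notin> f ` (B1 - {x})"
    by blast
  show "\<exists>y\<in>B2 - B1. insert y (B1 - {x}) \<in> bases ?M"
  proof (intro bexI)
    show "y \<in> B2 - B1"
      using x y by blast
    show "insert y (B1 - {x}) \<in> bases ?M"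
      using B1 B2 y x \<open>finite B1\<close> \<open>r \<ge> 1\<close>
      by (auto simp: bases_parallel_uniform inj_on_diff card_insert_if)
  qed
qed

lemma indep_dual_parallel_uniform:
  assumes "finite E" "r \<le> num_classes E L f"
  shows "indep (dual (parallel_uniform E L f r)) X \<longleftrightarrow> X \<subseteq> E \<and> r \<le> num_classes (E - X) L f"
proof
  assume "indep (dual (parallel_uniform E L f r)) X"
  then obtain B where B: "B \<subseteq> E - L" "card B = r" "inj_on f B" "X \<subseteq> E - B"
    unfolding indep_def bases_dual bases_parallel_uniform by auto
  have "card (f ` B) = r"
    using B card_image by blast
  moreover have "f ` B \<subseteq> f ` (E - X - L)"
    using B by auto
  ultimately have "r \<le> num_classes (E - X) L f"
    unfolding num_classes_def using assms(1) by (metis card_mono finite_Diff finite_imageI)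
  then show "X \<subseteq> E \<and> r \<le> num_classes (E - X) L f"
    using B by auto
next
  assume X: "X \<subseteq> E \<and> r \<le> num_classes (E - X) L f"
  obtain B where B: "B \<subseteq> E - X - L \<and> inj_on f B \<and> card B = r"
    using parallel_uniform_extend_to_basis[of "E - X" "{}" L f r] assms(1) X by auto
  then have "B \<in> bases (parallel_uniform E L f r)"
    by (auto simp: bases_parallel_uniform)
  moreover have "X \<subseteq> E - B"
    using X B by auto
  ultimately show "indep (dual (parallel_uniform E L f r)) X"
    unfolding indep_def bases_dual by auto
qed

lemma dual_basis_parallel_uniform_2I:
  assumes "x \<in> E - L" "y \<in> E - L" "f x \<noteq> f y"
  shows "E - {x, y} \<in> bases (dual (parallel_uniform E L f 2))"
proof -
  have "{x, y} \<in> bases (parallel_uniform E L f 2)"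
    unfolding bases_parallel_uniform_2 using assms by blast
  then show ?thesis
    using imageI[of "{x, y}" _ "\<lambda>B. E - B"] by (simp add: bases_dual)
qed

lemma is_matroid_dual_parallel_uniform:
  assumes "finite E" "r \<le> num_classes E L f"
  shows "is_matroid (dual (parallel_uniform E L f r))"
  unfolding is_matroid_def
proof (intro conjI ballI)
  let ?M = "parallel_uniform E L f r"
  show "finite (ground (dual ?M))" "bases (dual ?M) \<subseteq> Pow (ground (dual ?M))"
    using assms(1) by (auto simp: bases_dual)
  show "bases (dual ?M) \<noteq> {}"
    using is_matroid_parallel_uniform[OF assms] unfolding is_matroid_def bases_dual by auto
  fix B1' B2' x
  assume "B1' \<in> bases (dual ?M)" "B2' \<in> bases (dual ?M)" and x: "x \<in> B1' - B2'"
  then obtain B1 B2 where B1: "B1 \<subseteq> E - L" "card B1 = r" "inj_on f B1" "B1' = E - B1"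
    and B2: "B2 \<subseteq> E - L" "card B2 = r" "inj_on f B2" "B2' = E - B2"
    by (auto simp: bases_dual bases_parallel_uniform)
  have "finite B1" "finite B2"
    using B1 B2 assms(1) finite_subset by blast+
  have xB: "x \<in> B2" "x \<notin> B1"
    using x B1 B2 by auto
  have "\<exists>y\<in>B1 - B2. insert x (B1 - {y}) \<in> bases ?M"
  proof (cases "\<exists>z\<in>B1. f z = f x")
    case True
    then obtain z where z: "z \<in> B1" "f z = f x"
      by blast
    have "z \<notin> B2"
      using z xB B2(3) by (metis inj_on_def)
    moreover have "f x \<notin> f ` (B1 - {z})"
      using z B1(3) by (auto simp: inj_on_def)
    moreover have "card B1 \<ge> 1"
      using z \<open>finite B1\<close> by (metis One_nat_def Suc_leI card_gt_0_iff empty_iff)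
    ultimately show ?thesis
      using z xB B1 B2 \<open>finite B1\<close>
      by (intro bexI[of _ z]) (auto simp: bases_parallel_uniform card_insert_if inj_on_diff)
  next
    case False
    have "\<not> B1 \<subseteq> B2"
    proof
      assume "B1 \<subseteq> B2"
      then have "B1 = B2"
        using \<open>finite B2\<close> B1(2) B2(2) by (intro card_subset_eq) auto
      then show False
        using xB by simp
    qed
    then obtain y where y: "y \<in> B1" "y \<notin> B2"
      by blast
    then have "card B1 \<ge> 1"
      using \<open>finite B1\<close> by (metis One_nat_def Suc_leI card_gt_0_iff empty_iff)
    then show ?thesis
      using y xB B1 B2 \<open>finite B1\<close> False
      by (intro bexI[of _ y]) (auto simp: bases_parallel_uniform card_insert_if inj_on_diff)
  qed
  then obtain y where y: "y \<in> B1 - B2" "insert x (B1 - {y}) \<in> bases ?M"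
    by blast
  have "insert y (B1' - {x}) = E - insert x (B1 - {y})"
    using y xB x B1 by auto
  then show "\<exists>y\<in>B2' - B1'. insert y (B1' - {x}) \<in> bases (dual ?M)"
    using y B1 B2 unfolding bases_dual by (intro bexI[of _ y]) auto
qed

lemma delete_parallel_uniform:
  assumes "finite E" "r \<le> num_classes E L f"
  shows "delete (parallel_uniform E L f r) D =
           parallel_uniform (E - D) L f (min r (num_classes (E - D) L f))"
proof (rule matroid_eqI)
  let ?M = "parallel_uniform E L f r" and ?m = "num_classes (E - D) L f"
  have ind: "\<And>I. indep ?M I \<longleftrightarrow> I \<subseteq> E - L \<and> inj_on f I \<and> card I \<le> r"
    using indep_parallel_uniform[OF assms] .
  have fin: "finite (f ` (E - D - L))"
    using assms(1) by auto
  have card_le: "card B \<le> ?m" if "B \<subseteq> E - D - L" "inj_on f B" for B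
    using that fin card_mono[of "f ` (E - D - L)" "f ` B"] card_image[of f B]
    unfolding num_classes_def by auto
  show "bases (delete ?M D) = bases (parallel_uniform (E - D) L f (min r ?m))"
  proof (intro set_eqI iffI)
    fix B
    assume "B \<in> bases (delete ?M D)"
    then have B: "B \<subseteq> E - D - L" "inj_on f B" "card B \<le> r"
      and max: "\<forall>x\<in>E - D - B. \<not> indep ?M (insert x B)"
      unfolding bases_delete ind by auto
    have "finite B"
      using B assms(1) finite_subset by blast
    have "card B = min r ?m"
    proof (rule ccontr)
      assume "card B \<noteq> min r ?m"
      then have "card B < r" "card B < ?m"
        using card_le[OF B(1,2)] B(3) by auto
      then have "\<not> f ` (E - D - L) \<subseteq> f ` B"
        using B(2) \<open>finite B\<close> card_mono[of "f ` B" "f ` (E - D - L)"] card_image[of f B]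
        unfolding num_classes_def by auto
      then obtain x where x: "x \<in> E - D - L" "f x \<notin> f ` B"
        by auto
      then have "indep ?M (insert x B)"
        unfolding ind using B \<open>finite B\<close> \<open>card B < r\<close> by (auto simp: card_insert_if)
      then show False
        using max x by auto
    qed
    then show "B \<in> bases (parallel_uniform (E - D) L f (min r ?m))"
      using B by (auto simp: bases_parallel_uniform)
  next
    fix B
    assume "B \<in> bases (parallel_uniform (E - D) L f (min r ?m))"
    then have B: "B \<subseteq> E - D - L" "inj_on f B" "card B = min r ?m"
      by (auto simp: bases_parallel_uniform)
    have "finite B"
      using B assms(1) finite_subset by blast
    have "\<not> indep ?M (insert x B)" if x: "x \<in> E - D - B" for x
    proof
      assume "indep ?M (insert x B)"
      then have I: "insert x B \<subseteq> E - L" "inj_on f (insert x B)" "card (insert x B) \<le> r"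
        unfolding ind by auto
      then have "card B < r"
        using x \<open>finite B\<close> by simp
      moreover have "card (insert x B) \<le> ?m"
        using I x B by (intro card_le) auto
      ultimately show False
        using B(3) x \<open>finite B\<close> by simp
    qed
    then show "B \<in> bases (delete ?M D)"
      unfolding bases_delete ind using B by auto
  qed
qed simp

lemma num_classes_Un_new_classes:
  assumes "finite Z" "finite C" "Z \<inter> L = {}" "f ` Z \<inter> f ` (C - L) = {}" "inj_on f Z"
  shows "num_classes (Z \<union> C) L f = card Z + num_classes C L f"
proof -
  have "f ` ((Z \<union> C) - L) = f ` Z \<union> f ` (C - L)"
    using assms(3) by auto
  then show ?thesis
    unfolding num_classes_def using assms by (simp add: card_Un_disjoint card_image)
qed

lemma new_classes_of_essential:
  assumes "Y \<inter> C = {}"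
    and essential: "\<And>y. y \<in> Y \<Longrightarrow> num_classes (Y - {y} \<union> C) L f < num_classes (Y \<union> C) L f"
  shows "Y \<inter> L = {}" "f ` Y \<inter> f ` (C - L) = {}" "inj_on f Y"
proof -
  have new: "y \<notin> L \<and> f y \<notin> f ` ((Y - {y} \<union> C) - L)" if "y \<in> Y" for y
  proof (rule ccontr)
    assume "\<not> (y \<notin> L \<and> f y \<notin> f ` ((Y - {y} \<union> C) - L))"
    then have "f ` ((Y - {y} \<union> C) - L) = f ` ((Y \<union> C) - L)"
      using that by auto
    then show False
      using essential[OF that] unfolding num_classes_def by simp
  qed
  show "Y \<inter> L = {}"
    using new by auto
  show "f ` Y \<inter> f ` (C - L) = {}"
  proof (rule ccontr)
    assume "f ` Y \<inter> f ` (C - L) \<noteq> {}"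
    then obtain y c where "y \<in> Y" "c \<in> C - L" "f y = f c"
      by auto
    moreover have "c \<notin> Y"
      using \<open>c \<in> C - L\<close> assms(1) by auto
    ultimately have "f y \<in> f ` ((Y - {y} \<union> C) - L)"
      by auto
    then show False
      using new \<open>y \<in> Y\<close> by blast
  qed
  show "inj_on f Y"
  proof (rule inj_onI, rule ccontr)
    fix a b
    assume "a \<in> Y" "b \<in> Y" "f a = f b" "a \<noteq> b"
    then have "f a \<in> f ` ((Y - {a} \<union> C) - L)"
      using \<open>Y \<inter> L = {}\<close> by auto
    then show False
      using new \<open>a \<in> Y\<close> by blast
  qed
qed

text \<open>By duality, the bases of the contraction by \<open>C\<close> are the minimal \<open>Y\<close> for which \<open>Y \<union> C\<close>
  still meets \<open>r\<close> classes.\<close>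

lemma minimal_class_completion_iff:
  assumes "finite E" "C \<subseteq> E" "Y \<subseteq> E - C"
  shows "(r \<le> num_classes (Y \<union> C) L f \<and> (\<forall>y\<in>Y. num_classes (Y - {y} \<union> C) L f < r)) \<longleftrightarrow>
         Y \<subseteq> E - C - (L \<union> f -` f ` (C - L)) \<and> card Y = r - num_classes C L f \<and> inj_on f Y"
proof -
  have "finite C" "finite Y"
    using finite_subset[OF assms(2,1)] finite_subset[OF assms(3)] assms(1) by simp_all
  have count: "num_classes (Y \<union> C) L f = card Y + num_classes C L f"
    if "Y \<inter> L = {}" "f ` Y \<inter> f ` (C - L) = {}" "inj_on f Y"
    using num_classes_Un_new_classes[OF \<open>finite Y\<close> \<open>finite C\<close> that] .
  have count_remove: "num_classes (Y - {y} \<union> C) L f = card Y - 1 + num_classes C L f"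
    if "Y \<inter> L = {}" "f ` Y \<inter> f ` (C - L) = {}" "inj_on f Y" "y \<in> Y" for y
  proof -
    have Y': "finite (Y - {y})" "(Y - {y}) \<inter> L = {}" "f ` (Y - {y}) \<inter> f ` (C - L) = {}"
      "inj_on f (Y - {y})"
      using that \<open>finite Y\<close> by (auto simp: inj_on_diff)
    have "num_classes (Y - {y} \<union> C) L f = card (Y - {y}) + num_classes C L f"
      using num_classes_Un_new_classes[OF Y'(1) \<open>finite C\<close> Y'(2-4)] .
    then show ?thesis
      using that(4) \<open>finite Y\<close> by simp
  qed
  show ?thesis
  proof
    assume A: "r \<le> num_classes (Y \<union> C) L f \<and> (\<forall>y\<in>Y. num_classes (Y - {y} \<union> C) L f < r)"
    have "Y \<inter> C = {}"
      using assms(3) by blast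
    have essential: "num_classes (Y - {y} \<union> C) L f < num_classes (Y \<union> C) L f" if "y \<in> Y" for y
    proof -
      have "num_classes (Y - {y} \<union> C) L f < r"
        using A that by blast
      then show ?thesis
        using A by linarith
    qed
    note new = new_classes_of_essential[OF \<open>Y \<inter> C = {}\<close> essential]
    have "card Y = r - num_classes C L f"
    proof (cases "Y = {}")
      case True
      then show ?thesis
        using A count[OF new] by simp
    next
      case False
      then obtain y where "y \<in> Y"
        by blast
      then have "card Y > 0" "num_classes (Y - {y} \<union> C) L f < r"
        using A \<open>finite Y\<close> card_gt_0_iff by blast+
      then show ?thesis
        using A count[OF new] count_remove[OF new \<open>y \<in> Y\<close>] by linarith
    qed
    then show "Y \<subseteq> E - C - (L \<union> f -` f ` (C - L)) \<and> card Y = r - num_classes C L f \<and> inj_on f Y"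
      using assms(3) new by auto
  next
    assume B: "Y \<subseteq> E - C - (L \<union> f -` f ` (C - L)) \<and> card Y = r - num_classes C L f \<and> inj_on f Y"
    then have new: "Y \<inter> L = {}" "f ` Y \<inter> f ` (C - L) = {}" "inj_on f Y"
      by auto
    have "num_classes (Y - {y} \<union> C) L f < r" if "y \<in> Y" for y
    proof -
      have "card Y > 0"
        using that \<open>finite Y\<close> card_gt_0_iff by blast
      then show ?thesis
        using count_remove[OF new that] B by linarith
    qed
    moreover have "r \<le> num_classes (Y \<union> C) L f"
      using B count[OF new] by simp
    ultimately show "r \<le> num_classes (Y \<union> C) L f \<and> (\<forall>y\<in>Y. num_classes (Y - {y} \<union> C) L f < r)"
      by blast
  qed
qed

lemma contract_parallel_uniform:
  assumes "finite E" "r \<le> num_classes E L f" "C \<subseteq> E"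
  shows "contract (parallel_uniform E L f r) C =
           parallel_uniform (E - C) (L \<union> f -` f ` (C - L)) f (r - num_classes C L f)"
proof (rule matroid_eqI)
  let ?N = "parallel_uniform (E - C) (L \<union> f -` f ` (C - L)) f (r - num_classes C L f)"
  let ?D = "dual (parallel_uniform E L f r)"
  let ?g = "\<lambda>Y. num_classes (Y \<union> C) L f"
  have ind: "indep ?D X \<longleftrightarrow> r \<le> ?g ((E - C) - X)" if "X \<subseteq> E - C" for X
  proof -
    have "E - X = ((E - C) - X) \<union> C"
      using that assms(3) by auto
    then show ?thesis
      using indep_dual_parallel_uniform[OF assms(1,2), of X] that by auto
  qed
  have basis_iff: "r \<le> ?g Y \<and> (\<forall>y\<in>Y. ?g (Y - {y}) < r) \<longleftrightarrow> Y \<in> bases ?N"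
    if "Y \<subseteq> E - C" for Y
    using minimal_class_completion_iff[OF assms(1,3) that] unfolding bases_parallel_uniform by auto
  have bases_contract: "bases (contract (parallel_uniform E L f r) C) = (\<lambda>X. (E - C) - X) `
     {X. X \<subseteq> E - C \<and> indep ?D X \<and> (\<forall>x\<in>E - C - X. \<not> indep ?D (insert x X))}"
    by (simp add: contract_def bases_dual bases_delete)
  show "bases (contract (parallel_uniform E L f r) C) = bases ?N"
  proof (intro set_eqI iffI)
    fix Y
    assume "Y \<in> bases (contract (parallel_uniform E L f r) C)"
    then obtain X where X: "X \<subseteq> E - C" "indep ?D X" "\<forall>x\<in>E - C - X. \<not> indep ?D (insert x X)"
      and Y: "Y = (E - C) - X"
      unfolding bases_contract by auto
    have "?g (Y - {y}) < r" if "y \<in> Y" for y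
    proof -
      have "insert y X \<subseteq> E - C" "(E - C) - insert y X = Y - {y}"
        using that X Y by auto
      then show ?thesis
        using ind[of "insert y X"] X(3) that Y by auto
    qed
    then show "Y \<in> bases ?N"
      using basis_iff[of Y] ind[OF X(1)] X(2) Y by auto
  next
    fix Y
    assume Y: "Y \<in> bases ?N"
    then have YE: "Y \<subseteq> E - C"
      by (auto simp: bases_parallel_uniform)
    have min: "r \<le> ?g Y" "\<forall>y\<in>Y. ?g (Y - {y}) < r"
      using basis_iff[OF YE] Y by blast+
    let ?X = "(E - C) - Y"
    have "Y = (E - C) - ?X"
      using YE by auto
    moreover have "indep ?D ?X"
      using ind[of ?X] min(1) \<open>Y = (E - C) - ?X\<close> by auto
    moreover have "\<not> indep ?D (insert x ?X)" if "x \<in> E - C - ?X" for x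
    proof -
      have "insert x ?X \<subseteq> E - C" "(E - C) - insert x ?X = Y - {x}"
        using that YE by auto
      then show ?thesis
        using ind[of "insert x ?X"] min(2) that by auto
    qed
    ultimately show "Y \<in> bases (contract (parallel_uniform E L f r) C)"
      unfolding bases_contract by (intro image_eqI[of _ _ ?X]) auto
  qed
qed (simp add: contract_def)

lemma num_classes_contract_ge:
  assumes "finite E" "r \<le> num_classes E L f" "C \<subseteq> E"
  shows "r - num_classes C L f \<le> num_classes (E - C) (L \<union> f -` f ` (C - L)) f"
proof -
  have eq: "f ` ((E - C) - (L \<union> f -` f ` (C - L))) = f ` (E - L) - f ` (C - L)"
    using assms(3) by auto
  have "card (f ` (E - L)) - card (f ` (C - L)) \<le> card (f ` (E - L) - f ` (C - L))"
    using assms(1) finite_subset[OF assms(3,1)] by (intro diff_card_le_card_Diff) auto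
  then show ?thesis
    using assms(2) unfolding num_classes_def eq by linarith
qed

lemma parallel_uniform_rank_le_one:
  assumes "finite E" "r \<le> 1" "r \<le> num_classes E L f"
  obtains L' f' where "parallel_uniform E L f r = parallel_uniform E L' f' r"
    "num_classes E L' f' = r"
proof (cases r)
  case 0
  have "B = {}" if "B \<subseteq> E" "card B = 0" for B
    using that assms(1) finite_subset card_0_eq by metis
  then have "parallel_uniform E L f 0 = parallel_uniform E E f 0"
    by (intro matroid_eqI) (auto simp: bases_parallel_uniform)
  then show ?thesis
    using that 0 by (simp add: num_classes_def)
next
  case (Suc n)
  then have "r = 1"
    using assms(2) by simp
  have "parallel_uniform E L f 1 = parallel_uniform E L (\<lambda>_. 0) 1"
    by (rule matroid_eqI) (auto simp: bases_parallel_uniform card_Suc_eq)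
  moreover have "E - L \<noteq> {}"
    using assms(3) \<open>r = 1\<close> unfolding num_classes_def by (metis card.empty image_empty not_one_le_zero)
  then have "num_classes E L (\<lambda>_. 0) = 1"
    unfolding num_classes_def by (simp add: image_constant_conv)
  ultimately show ?thesis
    using that \<open>r = 1\<close> by blast
qed

definition singleton_class :: "nat set \<Rightarrow> (nat \<Rightarrow> nat) \<Rightarrow> nat \<Rightarrow> bool" where
  "singleton_class E f p \<longleftrightarrow> p \<in> E \<and> (\<forall>e\<in>E. f e = f p \<longrightarrow> e = p)"

lemma non_singleton_classE:
  assumes "x \<in> E" "\<not> singleton_class E f x"
  obtains x' where "x' \<in> E" "x' \<noteq> x" "f x' = f x"
  using assms unfolding singleton_class_def by auto

lemma not_singleton_classI: "y \<in> E \<Longrightarrow> y \<noteq> x \<Longrightarrow> f y = f x \<Longrightarrow> \<not> singleton_class E f x"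
  unfolding singleton_class_def by auto

lemma bases_uniform: "bases (uniform r n) = {B. B \<subseteq> {0..<n} \<and> card B = r}"
  by (simp add: uniform_def bases_def)

lemma ground_uniform [simp]: "ground (uniform r n) = {0..<n}"
  by (simp add: uniform_def ground_def)

lemma uniform_eq_parallel_uniform: "uniform r n = parallel_uniform {0..<n} {} id r"
  by (simp add: uniform_def parallel_uniform_def)

lemma dual_uniform:
  assumes "r \<le> n"
  shows "dual (uniform r n) = uniform (n - r) n"
proof (rule matroid_eqI)
  have "(\<lambda>B. {0..<n} - B) ` {B. B \<subseteq> {0..<n} \<and> card B = r} = {B. B \<subseteq> {0..<n} \<and> card B = n - r}"
  proof (intro set_eqI iffI)
    fix B
    assume "B \<in> (\<lambda>B. {0..<n} - B) ` {B. B \<subseteq> {0..<n} \<and> card B = r}"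
    then show "B \<in> {B. B \<subseteq> {0..<n} \<and> card B = n - r}"
      by (auto simp: card_Diff_subset finite_subset)
  next
    fix B
    assume B: "B \<in> {B. B \<subseteq> {0..<n} \<and> card B = n - r}"
    then have "card ({0..<n} - B) = r" "B = {0..<n} - ({0..<n} - B)"
      using assms by (auto simp: card_Diff_subset finite_subset)
    then show "B \<in> (\<lambda>B. {0..<n} - B) ` {B. B \<subseteq> {0..<n} \<and> card B = r}"
      by blast
  qed
  then show "bases (dual (uniform r n)) = bases (uniform (n - r) n)"
    by (simp add: bases_dual bases_uniform)
qed simp

section \<open>Binary representations\<close>

lemma binaryI: "(\<And>I. I \<subseteq> ground M \<Longrightarrow> indep M I \<longleftrightarrow> gf2_indep phi I) \<Longrightarrow> binary M"
  unfolding binary_def by blast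

lemma gf2_indepD:
  "gf2_indep phi I \<Longrightarrow> S \<subseteq> I \<Longrightarrow> S \<noteq> {} \<Longrightarrow> \<exists>k. odd (card {e\<in>S. phi e k})"
  unfolding gf2_indep_def by blast

lemma gf2_indep_nonzero:
  assumes "gf2_indep phi I" "e \<in> I"
  shows "\<exists>k. phi e k"
proof -
  obtain k where "odd (card {e'\<in>{e}. phi e' k})"
    using gf2_indepD[OF assms(1), of "{e}"] assms(2) by auto
  moreover have "{e'\<in>{e}. phi e' k} = (if phi e k then {e} else {})"
    by auto
  ultimately show ?thesis
    by (auto split: if_splits)
qed

lemma gf2_indep_distinct:
  assumes "gf2_indep phi I" "a \<in> I" "b \<in> I" "a \<noteq> b"
  shows "\<exists>k. phi a k \<noteq> phi b k"
proof (rule ccontr)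
  assume "\<nexists>k. phi a k \<noteq> phi b k"
  then have "{e\<in>{a, b}. phi e k} = (if phi a k then {a, b} else {})" for k
    by auto
  then show False
    using gf2_indepD[OF assms(1), of "{a, b}"] assms(2-4) by (auto split: if_splits)
qed

lemma binary_parallel_uniform_free:
  assumes "finite E" "r = num_classes E L f"
  shows "binary (parallel_uniform E L f r)"
proof (rule binaryI[where phi = "\<lambda>e k. e \<notin> L \<and> k = f e"])
  fix I
  assume "I \<subseteq> ground (parallel_uniform E L f r)"
  then have "I \<subseteq> E"
    by simp
  have ind: "indep (parallel_uniform E L f r) I \<longleftrightarrow> I \<subseteq> E - L \<and> inj_on f I \<and> card I \<le> r"
    using indep_parallel_uniform[OF assms(1)] assms(2) by simp
  show "indep (parallel_uniform E L f r) I \<longleftrightarrow> gf2_indep (\<lambda>e k. e \<notin> L \<and> k = f e) I"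
  proof
    assume "indep (parallel_uniform E L f r) I"
    then have "I \<inter> L = {}" "inj_on f I"
      using ind by auto
    show "gf2_indep (\<lambda>e k. e \<notin> L \<and> k = f e) I"
      unfolding gf2_indep_def
    proof (intro allI impI)
      fix S
      assume "S \<subseteq> I" "S \<noteq> {}"
      then obtain e where "e \<in> S"
        by blast
      then have "{e'\<in>S. e' \<notin> L \<and> f e = f e'} = {e}"
        using \<open>I \<inter> L = {}\<close> \<open>inj_on f I\<close> \<open>S \<subseteq> I\<close> by (auto simp: inj_on_def)
      then show "\<exists>k. odd (card {e'\<in>S. e' \<notin> L \<and> k = f e'})"
        by (intro exI[of _ "f e"]) simp
    qed
  next
    assume gf: "gf2_indep (\<lambda>e k. e \<notin> L \<and> k = f e) I"
    have "I \<subseteq> E - L"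
      using gf2_indep_nonzero[OF gf] \<open>I \<subseteq> E\<close> by blast
    moreover have "inj_on f I"
    proof (rule inj_onI, rule ccontr)
      fix a b
      assume "a \<in> I" "b \<in> I" "f a = f b" "a \<noteq> b"
      then show False
        using gf2_indep_distinct[OF gf] \<open>I \<subseteq> E - L\<close> by fastforce
    qed
    moreover have "card (f ` I) \<le> card (f ` (E - L))"
      using \<open>I \<subseteq> E - L\<close> assms(1) by (intro card_mono) auto
    ultimately show "indep (parallel_uniform E L f r) I"
      using ind assms(2) card_image unfolding num_classes_def by metis
  qed
qed

text \<open>Class \<open>c\<^sub>0\<close> gets the sum of the unit vectors of all other classes, so that the classes
  form a circuit.\<close>

definition circuit_vec :: "nat set \<Rightarrow> nat set \<Rightarrow> (nat \<Rightarrow> nat) \<Rightarrow> nat \<Rightarrow> nat \<Rightarrow> nat \<Rightarrow> bool" where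
  "circuit_vec E L f c0 e k \<longleftrightarrow>
     e \<notin> L \<and> (if f e = c0 then k \<in> f ` (E - L) \<and> k \<noteq> c0 else k = f e)"

lemma gf2_indep_circuit_vecI:
  assumes "I \<subseteq> E - L" "inj_on f I" "c1 \<in> f ` (E - L)" "c1 \<notin> f ` I"
  shows "gf2_indep (circuit_vec E L f c0) I"
  unfolding gf2_indep_def
proof (intro allI impI)
  fix S
  assume S: "S \<subseteq> I" "S \<noteq> {}"
  then have "S \<subseteq> E - L" "inj_on f S" "c1 \<notin> f ` S"
    using assms inj_on_subset by blast+
  show "\<exists>k. odd (card {e\<in>S. circuit_vec E L f c0 e k})"
  proof (cases "\<exists>e0\<in>S. f e0 = c0")
    case True
    then obtain e0 where "e0 \<in> S" "f e0 = c0"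
      by blast
    then have "{e\<in>S. circuit_vec E L f c0 e c1} = {e0}"
      using assms(3) \<open>S \<subseteq> E - L\<close> \<open>inj_on f S\<close> \<open>c1 \<notin> f ` S\<close> unfolding circuit_vec_def
      by (auto simp: inj_on_def)
    then show ?thesis
      by (intro exI[of _ c1]) simp
  next
    case False
    obtain e where "e \<in> S"
      using S by blast
    then have "{e'\<in>S. circuit_vec E L f c0 e' (f e)} = {e}"
      using \<open>S \<subseteq> E - L\<close> \<open>inj_on f S\<close> False unfolding circuit_vec_def by (auto simp: inj_on_def)
    then show ?thesis
      by (intro exI[of _ "f e"]) simp
  qed
qed

lemma gf2_indep_circuit_vecD:
  assumes gf: "gf2_indep (circuit_vec E L f c0) I" and "I \<subseteq> E" "c0 \<in> f ` (E - L)"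
  shows "I \<subseteq> E - L" "inj_on f I" "f ` I \<noteq> f ` (E - L)"
proof -
  show IL: "I \<subseteq> E - L"
    using gf2_indep_nonzero[OF gf] assms(2) unfolding circuit_vec_def by blast
  show inj: "inj_on f I"
  proof (rule inj_onI, rule ccontr)
    fix a b
    assume "a \<in> I" "b \<in> I" "f a = f b" "a \<noteq> b"
    then show False
      using gf2_indep_distinct[OF gf] IL unfolding circuit_vec_def by fastforce
  qed
  show "f ` I \<noteq> f ` (E - L)"
  proof
    assume fI: "f ` I = f ` (E - L)"
    then obtain e0 where e0: "e0 \<in> I" "f e0 = c0"
      using assms(3) by (metis imageE)
    have "even (card {e\<in>I. circuit_vec E L f c0 e k})" for k
    proof (cases "k \<in> f ` (E - L) \<and> k \<noteq> c0")
      case True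
      then obtain ek where "ek \<in> I" "f ek = k"
        using fI by (metis imageE)
      then have "{e\<in>I. circuit_vec E L f c0 e k} = {ek, e0}" "ek \<noteq> e0"
        using e0 True IL inj unfolding circuit_vec_def by (auto simp: inj_on_def)
      then show ?thesis
        by simp
    next
      case False
      then have "{e\<in>I. circuit_vec E L f c0 e k} = {}"
        using IL unfolding circuit_vec_def by auto
      then show ?thesis
        by (metis card.empty even_zero)
    qed
    then show False
      using gf2_indepD[OF gf, of I] e0 by auto
  qed
qed

lemma binary_parallel_uniform_circuit:
  assumes "finite E" "r + 1 = num_classes E L f"
  shows "binary (parallel_uniform E L f r)"
proof -
  have "f ` (E - L) \<noteq> {}"
    using assms(2) unfolding num_classes_def by (metis card.empty add_is_0 zero_neq_one)
  then obtain c0 where c0: "c0 \<in> f ` (E - L)"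
    by blast
  show ?thesis
  proof (rule binaryI[where phi = "circuit_vec E L f c0"])
    fix I
    assume "I \<subseteq> ground (parallel_uniform E L f r)"
    then have "I \<subseteq> E"
      by simp
    have card_iff: "card I \<le> r \<longleftrightarrow> f ` I \<noteq> f ` (E - L)" if "I \<subseteq> E - L" "inj_on f I"
    proof
      assume "card I \<le> r"
      then show "f ` I \<noteq> f ` (E - L)"
        using card_image[OF that(2)] assms(2) unfolding num_classes_def by auto
    next
      assume "f ` I \<noteq> f ` (E - L)"
      then have "card (f ` I) < card (f ` (E - L))"
        using that(1) assms(1) by (intro psubset_card_mono) auto
      then show "card I \<le> r"
        using card_image[OF that(2)] assms(2) unfolding num_classes_def by simp
    qed
    show "indep (parallel_uniform E L f r) I \<longleftrightarrow> gf2_indep (circuit_vec E L f c0) I"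
    proof
      assume "indep (parallel_uniform E L f r) I"
      then have I: "I \<subseteq> E - L" "inj_on f I" "card I \<le> r"
        using indep_parallel_uniform[OF assms(1)] assms(2) by auto
      then have "\<not> f ` (E - L) \<subseteq> f ` I"
        using card_iff by auto
      then obtain c1 where "c1 \<in> f ` (E - L)" "c1 \<notin> f ` I"
        by blast
      then show "gf2_indep (circuit_vec E L f c0) I"
        using gf2_indep_circuit_vecI[OF I(1,2)] by blast
    next
      assume "gf2_indep (circuit_vec E L f c0) I"
      note I = gf2_indep_circuit_vecD[OF this \<open>I \<subseteq> E\<close> c0]
      then show "indep (parallel_uniform E L f r) I"
        using indep_parallel_uniform[OF assms(1)] assms(2) card_iff[OF I(1,2)] by simp
    qed
  qed
qed

text \<open>A representation of the dual of \<open>parallel_uniform E L f r\<close> for \<open>r = num_classes E L f\<close>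
  (\<open>b = False\<close>) and \<open>r + 1 = num_classes E L f\<close> (\<open>b = True\<close>).  Coordinate \<open>Suc e\<close> belongs to the
  element \<open>e\<close>.\<close>

locale dual_class_representation =
  fixes E L :: "nat set" and f :: "nat \<Rightarrow> nat" and b :: bool
  assumes finite_E: "finite E"
begin

definition rep :: "nat \<Rightarrow> nat" where
  "rep c = (SOME e. e \<in> E - L \<and> f e = c)"

definition is_rep :: "nat \<Rightarrow> bool" where
  "is_rep e \<longleftrightarrow> e \<in> E - L \<and> rep (f e) = e"

definition vec :: "nat \<Rightarrow> nat \<Rightarrow> bool" where
  "vec e k \<longleftrightarrow> (if is_rep e
     then (\<exists>e'. k = Suc e' \<and> e' \<in> E - L \<and> \<not> is_rep e' \<and> f e' = f e) \<or> (b \<and> k = 0)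
     else k = Suc e)"

definition full_classes :: "nat set \<Rightarrow> nat set" where
  "full_classes X = {c \<in> f ` (E - L). \<forall>e\<in>E - L. f e = c \<longrightarrow> e \<in> X}"

lemma rep_mem: "c \<in> f ` (E - L) \<Longrightarrow> rep c \<in> E - L \<and> f (rep c) = c"
  unfolding rep_def by (rule someI_ex) auto

lemma is_rep_rep: "c \<in> f ` (E - L) \<Longrightarrow> is_rep (rep c)"
  using rep_mem unfolding is_rep_def by auto

lemma is_repD: "is_rep e \<Longrightarrow> rep (f e) = e \<and> e \<in> E - L"
  unfolding is_rep_def by auto

lemma inj_on_rep: "inj_on rep (f ` (E - L))"
  by (rule inj_onI) (metis rep_mem)

lemma vec_0: "vec e 0 \<longleftrightarrow> is_rep e \<and> b"
  unfolding vec_def by auto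

lemma vec_Suc:
  "vec e (Suc k) \<longleftrightarrow> (if is_rep e then k \<in> E - L \<and> \<not> is_rep k \<and> f k = f e else k = e)"
  unfolding vec_def by auto

lemma finite_full_classes: "finite (full_classes X)"
  unfolding full_classes_def using finite_E by auto

lemma full_classes_subset: "full_classes X \<subseteq> f ` (E - L)"
  unfolding full_classes_def by auto

lemma vec_support_union_of_classes:
  assumes "Cs \<subseteq> f ` (E - L)"
  defines "S \<equiv> {e \<in> E - L. f e \<in> Cs}"
  shows "{e\<in>S. vec e 0} = (if b then rep ` Cs else {})"
    and "even (card {e\<in>S. vec e (Suc k)})"
proof -
  show "{e\<in>S. vec e 0} = (if b then rep ` Cs else {})"
  proof (intro set_eqI iffI)
    fix e
    assume "e \<in> {e\<in>S. vec e 0}"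
    then show "e \<in> (if b then rep ` Cs else {})"
      using is_repD[of e] unfolding S_def vec_0 by (auto intro!: image_eqI[of e rep "f e"])
  next
    fix e
    assume "e \<in> (if b then rep ` Cs else {})"
    then show "e \<in> {e\<in>S. vec e 0}"
      using rep_mem is_rep_rep assms(1) unfolding S_def vec_0 by (auto split: if_splits)
  qed
  have "{e\<in>S. vec e (Suc k)} = (if k \<in> S \<and> \<not> is_rep k then {k, rep (f k)} else {})"
  proof (intro set_eqI iffI)
    fix e
    assume "e \<in> {e\<in>S. vec e (Suc k)}"
    then show "e \<in> (if k \<in> S \<and> \<not> is_rep k then {k, rep (f k)} else {})"
      using is_repD[of e] unfolding S_def vec_Suc by (auto split: if_splits)
  next
    fix e
    assume "e \<in> (if k \<in> S \<and> \<not> is_rep k then {k, rep (f k)} else {})"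
    then show "e \<in> {e\<in>S. vec e (Suc k)}"
      using rep_mem[of "f k"] is_rep_rep[of "f k"] unfolding S_def vec_Suc
      by (auto split: if_splits)
  qed
  moreover have "k \<noteq> rep (f k)" if "k \<in> S" "\<not> is_rep k"
    using that is_rep_rep[of "f k"] unfolding S_def by auto
  ultimately show "even (card {e\<in>S. vec e (Suc k)})"
    by (auto simp: card_insert_if)
qed

lemma dependent_of_full_classes:
  assumes "X \<subseteq> E" "Cs \<subseteq> full_classes X" "card Cs = (if b then 2 else 1)"
  shows "\<not> gf2_indep vec X"
proof
  assume gf: "gf2_indep vec X"
  define S where "S = {e \<in> E - L. f e \<in> Cs}"
  have Cs: "Cs \<subseteq> f ` (E - L)"
    using assms(2) full_classes_subset by blast
  obtain c where "c \<in> Cs"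
    using assms(3) by (cases b) (auto simp: card_2_iff card_1_singleton_iff)
  then have "rep c \<in> S"
    using rep_mem Cs unfolding S_def by auto
  moreover have "S \<subseteq> X"
    using assms(2) unfolding S_def full_classes_def by auto
  ultimately obtain k where k: "odd (card {e\<in>S. vec e k})"
    using gf2_indepD[OF gf] by blast
  have "card (rep ` Cs) = card Cs"
    using inj_on_subset[OF inj_on_rep Cs] card_image by blast
  then have "even (card {e\<in>S. vec e 0})"
    using vec_support_union_of_classes(1)[OF Cs] assms(3) unfolding S_def by simp
  then show False
    using k vec_support_union_of_classes(2)[OF Cs] unfolding S_def by (cases k) auto
qed

lemma union_of_classes_of_even_support:
  assumes even: "\<And>k. even (card {e\<in>S. vec e (Suc k)})" and "e \<in> S"
  shows "e \<in> E - L" and "\<And>e'. e' \<in> E - L \<Longrightarrow> f e' = f e \<Longrightarrow> e' \<in> S"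
proof -
  have rep_in: "e \<in> E - L \<and> rep (f e) \<in> S" if "e \<in> S" for e
  proof (cases "is_rep e")
    case True
    then show ?thesis
      using is_repD that by auto
  next
    case False
    show ?thesis
    proof (rule ccontr)
      assume "\<not> (e \<in> E - L \<and> rep (f e) \<in> S)"
      then have "{e'\<in>S. vec e' (Suc e)} = {e}"
        using that False is_repD unfolding vec_Suc by (auto split: if_splits)
      then show False
        using even[of e] by simp
    qed
  qed
  then show "e \<in> E - L"
    using \<open>e \<in> S\<close> by blast
  fix e'
  assume e': "e' \<in> E - L" "f e' = f e"
  show "e' \<in> S"
  proof (cases "is_rep e'")
    case True
    then show ?thesis
      using is_repD rep_in[OF \<open>e \<in> S\<close>] e' by metis
  next
    case False
    let ?r = "rep (f e)"
    have r: "?r \<in> S" "is_rep ?r" "f ?r = f e"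
      using rep_in[OF \<open>e \<in> S\<close>] is_rep_rep[of "f e"] rep_mem[of "f e"] by auto
    show ?thesis
    proof (rule ccontr)
      assume "e' \<notin> S"
      then have "{e''\<in>S. vec e'' (Suc e')} = {?r}"
        using r e' False is_repD unfolding vec_Suc by (auto split: if_splits)
      then show False
        using even[of e'] by simp
    qed
  qed
qed

lemma full_classes_of_dependent:
  assumes "X \<subseteq> E" "\<not> gf2_indep vec X"
  shows "(if b then 2 else 1) \<le> card (full_classes X)"
proof -
  obtain S where S: "S \<subseteq> X" "S \<noteq> {}" and even: "\<And>k. even (card {e\<in>S. vec e k})"
    using assms(2) unfolding gf2_indep_def by blast
  note closed = union_of_classes_of_even_support[OF even]
  have Cs: "f ` S \<subseteq> full_classes X"
    using closed S(1) unfolding full_classes_def by blast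
  have "f ` S \<noteq> {}"
    using S(2) by blast
  then have pos: "card (f ` S) \<noteq> 0"
    using finite_subset[OF Cs finite_full_classes] by simp
  have "2 \<le> card (f ` S)" if b
  proof -
    have "f ` S \<subseteq> f ` (E - L)"
      using closed(1) by blast
    then have "card (rep ` f ` S) = card (f ` S)"
      using inj_on_subset[OF inj_on_rep] card_image by blast
    moreover have "{e\<in>S. vec e 0} = rep ` f ` S"
      using vec_support_union_of_classes(1)[OF \<open>f ` S \<subseteq> f ` (E - L)\<close>] closed \<open>b\<close>
      by (auto simp: vec_0)
    ultimately have "even (card (f ` S))"
      using even[of 0] by simp
    then obtain k where "card (f ` S) = 2 * k"
      by (auto elim: evenE)
    then show ?thesis
      using pos by simp
  qed
  then show ?thesis
    using pos card_mono[OF finite_full_classes Cs] by (auto split: if_splits)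
qed

lemma gf2_indep_vec_iff:
  assumes "X \<subseteq> E"
  shows "gf2_indep vec X \<longleftrightarrow> card (full_classes X) < (if b then 2 else 1)"
proof
  assume gf: "gf2_indep vec X"
  show "card (full_classes X) < (if b then 2 else 1)"
  proof (rule ccontr)
    assume "\<not> ?thesis"
    then obtain Cs where "Cs \<subseteq> full_classes X" "card Cs = (if b then 2 else 1)"
      using obtain_subset_with_card_n by (metis not_less)
    then show False
      using dependent_of_full_classes[OF assms] gf by blast
  qed
next
  assume "card (full_classes X) < (if b then 2 else 1)"
  then show "gf2_indep vec X"
    using full_classes_of_dependent[OF assms] by fastforce
qed

lemma num_classes_complement:
  assumes "X \<subseteq> E"
  shows "num_classes (E - X) L f = num_classes E L f - card (full_classes X)"
proof -
  have "f ` (E - X - L) = f ` (E - L) - full_classes X"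
  proof (intro set_eqI iffI)
    fix c
    assume "c \<in> f ` (E - X - L)"
    then show "c \<in> f ` (E - L) - full_classes X"
      unfolding full_classes_def by auto
  next
    fix c
    assume "c \<in> f ` (E - L) - full_classes X"
    then obtain e where "e \<in> E - L" "f e = c" "e \<notin> X"
      unfolding full_classes_def by auto
    then show "c \<in> f ` (E - X - L)"
      by auto
  qed
  then show ?thesis
    unfolding num_classes_def using full_classes_subset finite_full_classes
    by (simp add: card_Diff_subset)
qed

lemma binary_dual_parallel_uniform:
  assumes "r + (if b then 1 else 0) = num_classes E L f"
  shows "binary (dual (parallel_uniform E L f r))"
proof (rule binaryI[where phi = vec])
  fix X
  assume "X \<subseteq> ground (dual (parallel_uniform E L f r))"
  then have "X \<subseteq> E"
    by simp
  have "card (full_classes X) \<le> num_classes E L f"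
    unfolding num_classes_def using full_classes_subset finite_E by (intro card_mono) auto
  then show "indep (dual (parallel_uniform E L f r)) X \<longleftrightarrow> gf2_indep vec X"
    using indep_dual_parallel_uniform[OF finite_E, of r L f X] assms \<open>X \<subseteq> E\<close>
      num_classes_complement[OF \<open>X \<subseteq> E\<close>] gf2_indep_vec_iff[OF \<open>X \<subseteq> E\<close>]
    by (auto split: if_splits)
qed

end

lemma binary_dual_parallel_uniform_free:
  assumes "finite E" "r = num_classes E L f"
  shows "binary (dual (parallel_uniform E L f r))"
proof -
  interpret dual_class_representation E L f False
    using assms(1) by unfold_locales
  show ?thesis
    using binary_dual_parallel_uniform assms(2) by simp
qed

lemma binary_dual_parallel_uniform_circuit:
  assumes "finite E" "r + 1 = num_classes E L f"
  shows "binary (dual (parallel_uniform E L f r))"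
proof -
  interpret dual_class_representation E L f True
    using assms(1) by unfold_locales
  show ?thesis
    using binary_dual_parallel_uniform assms(2) by simp
qed

section \<open>Members of the class R\<close>

text \<open>Exchange characterisation of a circuit-hyperplane in a matroid whose bases all have size \<open>r\<close>.\<close>

definition relaxable :: "'a matroid \<Rightarrow> 'a set \<Rightarrow> nat \<Rightarrow> bool" where
  "relaxable M H r \<longleftrightarrow> finite (ground M) \<and> bases M \<subseteq> Pow (ground M) \<and>
     (\<forall>B\<in>bases M. card B = r) \<and> H \<subseteq> ground M \<and> card H = r \<and> H \<notin> bases M \<and>
     H \<noteq> {} \<and> ground M - H \<noteq> {} \<and> (\<forall>x\<in>H. \<forall>y\<in>ground M - H. insert y (H - {x}) \<in> bases M)"

lemma rank_eq_of_basis_subset: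
  assumes "finite (ground M)" "bases M \<subseteq> Pow (ground M)" "\<And>B. B \<in> bases M \<Longrightarrow> card B = r"
    and "B \<in> bases M" "B \<subseteq> X"
  shows "rank M X = r"
proof -
  have card_indep: "card J \<le> r" if "indep M J" for J
    using card_le_of_indep[OF assms(1-3) that] .
  have "indep M B"
    using assms(4) unfolding indep_def by blast
  then have "rank M X = card B"
    using card_indep assms(3,4) by (intro rank_eqI[OF card_indep assms(5)]) auto
  then show ?thesis
    using assms(3,4) by simp
qed

lemma relaxable_circuit:
  assumes "relaxable M H r"
  shows "circuit M H"
proof -
  have fin: "finite (ground M)" and BE: "bases M \<subseteq> Pow (ground M)"
    and card_B: "\<And>B. B \<in> bases M \<Longrightarrow> card B = r"
    and H: "H \<subseteq> ground M" "card H = r" "H \<notin> bases M" "ground M - H \<noteq> {}"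
    and exch: "\<And>x y. x \<in> H \<Longrightarrow> y \<in> ground M - H \<Longrightarrow> insert y (H - {x}) \<in> bases M"
    using assms unfolding relaxable_def by auto
  obtain y0 where y0: "y0 \<in> ground M - H"
    using H(4) by blast
  have "\<not> indep M H"
  proof
    assume "indep M H"
    then obtain B where B: "B \<in> bases M" "H \<subseteq> B"
      unfolding indep_def by blast
    moreover have "finite B"
      using B(1) BE finite_subset[OF _ fin] by blast
    ultimately have "H = B"
      using card_B H(2) by (intro card_subset_eq) auto
    then show False
      using H(3) B(1) by simp
  qed
  moreover have "indep M (H - {x})" if "x \<in> H" for x
    using exch[OF that y0] unfolding indep_def by blast
  ultimately show ?thesis
    unfolding circuit_def using H(1) by blast
qed

lemma relaxable_hyperplane:
  assumes "relaxable M H r"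
  shows "hyperplane M H"
proof -
  have fin: "finite (ground M)" and BE: "bases M \<subseteq> Pow (ground M)"
    and card_B: "\<And>B. B \<in> bases M \<Longrightarrow> card B = r"
    and H: "H \<subseteq> ground M" "card H = r" "H \<noteq> {}" "ground M - H \<noteq> {}"
    and exch: "\<And>x y. x \<in> H \<Longrightarrow> y \<in> ground M - H \<Longrightarrow> insert y (H - {x}) \<in> bases M"
    using assms unfolding relaxable_def by auto
  have "\<not> indep M H" and indep_minus: "\<And>x. x \<in> H \<Longrightarrow> indep M (H - {x})"
    using relaxable_circuit[OF assms] unfolding circuit_def by auto
  obtain x0 y0 where x0: "x0 \<in> H" and y0: "y0 \<in> ground M - H"
    using H(3,4) by blast
  have "finite H"
    using finite_subset[OF H(1) fin] .
  then have "r \<ge> 1" "card (H - {x0}) = r - 1"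
    using H(2,3) x0 by (metis One_nat_def Suc_leI card_gt_0_iff, simp)
  have rank_insert: "rank M (insert y H) = r" if "y \<in> ground M - H" for y
    using rank_eq_of_basis_subset[OF fin BE card_B exch[OF x0 that]] by blast
  have "rank M (ground M) = r"
    using rank_eq_of_basis_subset[OF fin BE card_B exch[OF x0 y0]] y0 H(1) by blast
  moreover have "rank M H = r - 1"
  proof -
    have "card J \<le> r - 1" if "J \<subseteq> H" "indep M J" for J
    proof -
      have "J \<noteq> H"
        using that \<open>\<not> indep M H\<close> by blast
      then have "card J < card H"
        using that(1) \<open>finite H\<close> by (meson psubsetI psubset_card_mono)
      then show ?thesis
        using H(2) by simp
    qed
    then have "rank M H = card (H - {x0})"
      using card_le_of_indep[OF fin BE card_B] \<open>card (H - {x0}) = r - 1\<close>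
      by (intro rank_eqI[of M r _ H] indep_minus[OF x0]) auto
    then show ?thesis
      using \<open>card (H - {x0}) = r - 1\<close> by simp
  qed
  ultimately show ?thesis
    unfolding hyperplane_def using H(1) rank_insert \<open>r \<ge> 1\<close> by auto
qed

lemma relaxable_circuit_hyperplane:
  "relaxable M H r \<Longrightarrow> circuit_hyperplane M H"
  unfolding circuit_hyperplane_def using relaxable_circuit relaxable_hyperplane by blast

lemma relaxable_dual:
  assumes "relaxable M H r"
  shows "relaxable (dual M) (ground M - H) (card (ground M) - r)"
proof -
  let ?E = "ground M"
  have fin: "finite ?E" and BE: "bases M \<subseteq> Pow ?E" and card_B: "\<And>B. B \<in> bases M \<Longrightarrow> card B = r"
    and H: "H \<subseteq> ?E" "card H = r" "H \<notin> bases M" "H \<noteq> {}" "?E - H \<noteq> {}"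
    and exch: "\<And>x y. x \<in> H \<Longrightarrow> y \<in> ?E - H \<Longrightarrow> insert y (H - {x}) \<in> bases M"
    using assms unfolding relaxable_def by auto
  have card_compl: "card (?E - B) = card ?E - r" if "B \<subseteq> ?E" "card B = r" for B
    using that fin finite_subset by (metis card_Diff_subset)
  show ?thesis
    unfolding relaxable_def
  proof (intro conjI ballI)
    show "finite (ground (dual M))" "bases (dual M) \<subseteq> Pow (ground (dual M))"
      using fin by (auto simp: bases_dual)
    show "card B = card ?E - r" if "B \<in> bases (dual M)" for B
      using that card_compl card_B BE by (auto simp: bases_dual)
    show "?E - H \<subseteq> ground (dual M)" "card (?E - H) = card ?E - r"
      using card_compl[OF H(1,2)] by auto
    show "?E - H \<notin> bases (dual M)"
    proof
      assume "?E - H \<in> bases (dual M)"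
      then obtain B where "B \<in> bases M" "?E - H = ?E - B"
        by (auto simp: bases_dual)
      moreover from this have "H = B"
        using H(1) BE by blast
      ultimately show False
        using H(3) by simp
    qed
    show "?E - H \<noteq> {}" "ground (dual M) - (?E - H) \<noteq> {}"
      using H by auto
  next
    fix x y
    assume "x \<in> ?E - H" "y \<in> ground (dual M) - (?E - H)"
    then have "insert y ((?E - H) - {x}) = ?E - insert x (H - {y})" "insert x (H - {y}) \<in> bases M"
      using H(1) exch by auto
    then show "insert y ((?E - H) - {x}) \<in> bases (dual M)"
      by (auto simp: bases_dual)
  qed
qed

lemma in_R_relaxI:
  "is_matroid M \<Longrightarrow> is_matroid N \<Longrightarrow> binary N \<Longrightarrow> circuit_hyperplane N H \<Longrightarrow> M = relax N H \<Longrightarrow> in_R M"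
  unfolding in_R_def by blast

context
  fixes E :: "nat set" and f :: "nat \<Rightarrow> nat" and p q :: nat
  assumes finite_E: "finite E" and four: "num_classes E {} f = 4"
    and p: "singleton_class E f p" and q: "singleton_class E f q" and "f p \<noteq> f q"
begin

lemma merged_classes_eq_iff:
  assumes "a \<in> E" "b \<in> E" "a \<noteq> b"
  shows "(f(q := f p)) a = (f(q := f p)) b \<longleftrightarrow> f a = f b \<or> {a, b} = {p, q}"
  using assms p q \<open>f p \<noteq> f q\<close> unfolding singleton_class_def by (auto simp: doubleton_eq_iff)

lemma num_classes_merged: "num_classes E {} (f(q := f p)) = 3"
proof -
  have "(f(q := f p)) ` E = f ` E - {f q}"
  proof (intro set_eqI iffI)
    fix c
    assume "c \<in> (f(q := f p)) ` E"
    then obtain e where "e \<in> E" "c = (f(q := f p)) e"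
      by blast
    then show "c \<in> f ` E - {f q}"
      using p q \<open>f p \<noteq> f q\<close> unfolding singleton_class_def by (cases "e = q") auto
  next
    fix c
    assume "c \<in> f ` E - {f q}"
    then obtain e where "e \<in> E" "c = f e" "e \<noteq> q"
      by auto
    then show "c \<in> (f(q := f p)) ` E"
      by (auto intro!: image_eqI[of _ _ e])
  qed
  then show ?thesis
    using four q finite_E unfolding num_classes_def singleton_class_def
    by (simp add: card_Diff_singleton)
qed

lemma parallel_uniform_eq_relax_merged:
  "parallel_uniform E {} f 2 = relax (parallel_uniform E {} (f(q := f p)) 2) {p, q}"
proof (rule matroid_eqI)
  let ?f' = "f(q := f p)"
  have "{{a, b} | a b. a \<in> E \<and> b \<in> E \<and> f a \<noteq> f b} =
      insert {p, q} {{a, b} | a b. a \<in> E \<and> b \<in> E \<and> ?f' a \<noteq> ?f' b}"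
  proof (intro set_eqI iffI)
    fix B
    assume "B \<in> {{a, b} | a b. a \<in> E \<and> b \<in> E \<and> f a \<noteq> f b}"
    then obtain a b where ab: "B = {a, b}" "a \<in> E" "b \<in> E" "f a \<noteq> f b"
      by blast
    then have "B = {p, q} \<or> ?f' a \<noteq> ?f' b"
      using merged_classes_eq_iff[of a b] by auto
    then show "B \<in> insert {p, q} {{a, b} | a b. a \<in> E \<and> b \<in> E \<and> ?f' a \<noteq> ?f' b}"
      using ab by blast
  next
    fix B
    assume "B \<in> insert {p, q} {{a, b} | a b. a \<in> E \<and> b \<in> E \<and> ?f' a \<noteq> ?f' b}"
    then consider "B = {p, q}" | a b where "B = {a, b}" "a \<in> E" "b \<in> E" "?f' a \<noteq> ?f' b"
      by blast
    then show "B \<in> {{a, b} | a b. a \<in> E \<and> b \<in> E \<and> f a \<noteq> f b}"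
    proof cases
      case 1
      then show ?thesis
        using p q \<open>f p \<noteq> f q\<close> unfolding singleton_class_def by blast
    next
      case 2
      then have "f a \<noteq> f b"
        using merged_classes_eq_iff[of a b] by fastforce
      then show ?thesis
        using 2 by blast
    qed
  qed
  then show "bases (parallel_uniform E {} f 2) = bases (relax (parallel_uniform E {} ?f' 2) {p, q})"
    unfolding bases_relax bases_parallel_uniform_2 by simp
qed simp

lemma relaxable_merged: "relaxable (parallel_uniform E {} (f(q := f p)) 2) {p, q} 2"
  unfolding relaxable_def
proof (intro conjI ballI)
  let ?N = "parallel_uniform E {} (f(q := f p)) 2"
  have "p \<noteq> q"
    using \<open>f p \<noteq> f q\<close> by blast
  show "finite (ground ?N)" "bases ?N \<subseteq> Pow (ground ?N)" "{p, q} \<subseteq> ground ?N"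
    "card {p, q} = 2" "{p, q} \<noteq> {}"
    using finite_E bases_parallel_uniform_Pow p q \<open>p \<noteq> q\<close> unfolding singleton_class_def by auto
  show "card B = 2" if "B \<in> bases ?N" for B
    using that by (auto simp: bases_parallel_uniform)
  show "{p, q} \<notin> bases ?N"
    using \<open>p \<noteq> q\<close> by (auto simp: bases_parallel_uniform)
  show "ground ?N - {p, q} \<noteq> {}"
  proof
    assume "ground ?N - {p, q} = {}"
    then have "card (f ` E) \<le> card {f p, f q}"
      by (intro card_mono) auto
    then show False
      using four \<open>f p \<noteq> f q\<close> unfolding num_classes_def by simp
  qed
  fix x y
  assume "x \<in> {p, q}" "y \<in> ground ?N - {p, q}"
  then obtain z where z: "{p, q} - {x} = {z}" "z \<in> {p, q}" and y: "y \<in> E" "y \<notin> {p, q}"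
    using \<open>p \<noteq> q\<close> by auto
  have "f y \<noteq> f p"
    using p y unfolding singleton_class_def by auto
  then have "(f(q := f p)) y \<noteq> (f(q := f p)) z"
    using y z by auto
  moreover have "z \<in> E"
    using z p q unfolding singleton_class_def by auto
  ultimately show "insert y ({p, q} - {x}) \<in> bases ?N"
    unfolding z(1) bases_parallel_uniform_2 using y by blast
qed

lemma in_R_parallel_uniform_two_singletons:
  "in_R (parallel_uniform E {} f 2) \<and> in_R (dual (parallel_uniform E {} f 2))"
proof -
  let ?N = "parallel_uniform E {} (f(q := f p)) 2"
  have N: "is_matroid ?N" "binary ?N" "is_matroid (dual ?N)" "binary (dual ?N)"
    using is_matroid_parallel_uniform[OF finite_E] is_matroid_dual_parallel_uniform[OF finite_E]
      binary_parallel_uniform_circuit[OF finite_E] binary_dual_parallel_uniform_circuit[OF finite_E]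
      num_classes_merged by simp_all
  have M: "is_matroid (parallel_uniform E {} f 2)" "is_matroid (dual (parallel_uniform E {} f 2))"
    using is_matroid_parallel_uniform[OF finite_E] is_matroid_dual_parallel_uniform[OF finite_E] four
    by simp_all
  have "dual (parallel_uniform E {} f 2) = dual (relax ?N {p, q})"
    using parallel_uniform_eq_relax_merged by simp
  also have "\<dots> = relax (dual ?N) (ground ?N - {p, q})"
    by (rule dual_relax)
  finally have dual_eq: "dual (parallel_uniform E {} f 2) = relax (dual ?N) (ground ?N - {p, q})" .
  show ?thesis
    using in_R_relaxI[OF M(1) N(1,2) relaxable_circuit_hyperplane[OF relaxable_merged]
        parallel_uniform_eq_relax_merged]
      in_R_relaxI[OF M(2) N(3,4) _ dual_eq] relaxable_circuit_hyperplane[OF relaxable_dual[OF relaxable_merged]]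
    by simp
qed

end

definition R_parameters :: "nat set \<Rightarrow> nat set \<Rightarrow> (nat \<Rightarrow> nat) \<Rightarrow> nat \<Rightarrow> bool" where
  "R_parameters E L f r \<longleftrightarrow> r \<le> 1 \<or> num_classes E L f \<le> r + 1 \<or>
     (r = 2 \<and> L = {} \<and> num_classes E L f = 4 \<and>
      (\<exists>p q. singleton_class E f p \<and> singleton_class E f q \<and> f p \<noteq> f q))"

lemma in_R_parallel_uniform:
  assumes "finite E" "r \<le> num_classes E L f" "R_parameters E L f r"
  shows "in_R (parallel_uniform E L f r) \<and> in_R (dual (parallel_uniform E L f r))"
proof -
  have matroids: "is_matroid (parallel_uniform E L f r)" "is_matroid (dual (parallel_uniform E L f r))"
    using is_matroid_parallel_uniform[OF assms(1,2)] is_matroid_dual_parallel_uniform[OF assms(1,2)] .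
  have binary: "in_R (parallel_uniform E L' f' r) \<and> in_R (dual (parallel_uniform E L' f' r))"
    if "parallel_uniform E L f r = parallel_uniform E L' f' r"
      "binary (parallel_uniform E L' f' r)" "binary (dual (parallel_uniform E L' f' r))" for L' f'
    using that matroids unfolding in_R_def by simp
  consider "r \<le> 1" | "r = num_classes E L f" | "r + 1 = num_classes E L f"
    | p q where "r = 2" "L = {}" "num_classes E L f = 4" "singleton_class E f p"
        "singleton_class E f q" "f p \<noteq> f q"
    using assms(2,3) unfolding R_parameters_def by force
  then show ?thesis
  proof cases
    case 1
    then obtain L' f' where "parallel_uniform E L f r = parallel_uniform E L' f' r"
      "num_classes E L' f' = r"
      using parallel_uniform_rank_le_one[OF assms(1) _ assms(2)] by blast
    then show ?thesis
      using binary binary_parallel_uniform_free[OF assms(1)] binary_dual_parallel_uniform_free[OF assms(1)]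
      by metis
  next
    case 2
    then show ?thesis
      using binary binary_parallel_uniform_free[OF assms(1)] binary_dual_parallel_uniform_free[OF assms(1)]
      by metis
  next
    case 3
    then show ?thesis
      using binary binary_parallel_uniform_circuit[OF assms(1)] binary_dual_parallel_uniform_circuit[OF assms(1)]
      by metis
  next
    case 4
    then show ?thesis
      using in_R_parallel_uniform_two_singletons[OF assms(1)] by simp
  qed
qed

lemma R_parameters_rank_le_one: "r \<le> 1 \<Longrightarrow> R_parameters E L f r"
  unfolding R_parameters_def by simp

text \<open>A proper minor of a rank-2 matroid with parallel classes or of its dual either has a
  nonempty contraction on the rank-2 side, which leaves rank at most one, or it is a proper
  restriction.\<close>

context
  fixes E :: "nat set" and f :: "nat \<Rightarrow> nat"
  assumes finite_E: "finite E" and two_classes: "2 \<le> num_classes E {} f"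
    and restrictions: "\<And>X. X \<subset> E \<Longrightarrow> num_classes X {} f \<le> 3 \<or> (num_classes X {} f = 4 \<and>
       (\<exists>p q. singleton_class X f p \<and> singleton_class X f q \<and> f p \<noteq> f q))"
begin

lemma R_parameters_restriction:
  assumes "X \<subset> E"
  shows "R_parameters X {} f (min 2 (num_classes X {} f))"
  using restrictions[OF assms] unfolding R_parameters_def by auto

lemma in_R_minor_parallel_uniform:
  assumes "C \<subseteq> E" "D \<subseteq> E" "C \<inter> D = {}" "C \<union> D \<noteq> {}"
  shows "in_R (delete (contract (parallel_uniform E {} f 2) C) D)"
proof -
  let ?L = "f -` f ` C" and ?r = "2 - num_classes C {} f"
  have "finite (E - C)"
    using finite_E by simp
  have contr: "contract (parallel_uniform E {} f 2) C = parallel_uniform (E - C) ?L f ?r"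
    using contract_parallel_uniform[OF finite_E two_classes assms(1)] by simp
  have r: "?r \<le> num_classes (E - C) ?L f"
    using num_classes_contract_ge[OF finite_E two_classes assms(1)] by simp
  let ?r' = "min ?r (num_classes (E - C - D) ?L f)"
  have minor: "delete (contract (parallel_uniform E {} f 2) C) D = parallel_uniform (E - C - D) ?L f ?r'"
    unfolding contr using delete_parallel_uniform[OF \<open>finite (E - C)\<close> r] by simp
  have "R_parameters (E - C - D) ?L f ?r'"
  proof (cases "C = {}")
    case True
    then show ?thesis
      using R_parameters_restriction[of "E - D"] assms(2,4) by auto
  next
    case False
    then have "1 \<le> num_classes C {} f"
      using assms(1) finite_subset[OF _ finite_E] unfolding num_classes_def
      by (simp add: Suc_leI card_gt_0_iff)
    then show ?thesis
      by (intro R_parameters_rank_le_one) linarith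
  qed
  then show ?thesis
    unfolding minor using in_R_parallel_uniform[of "E - C - D" ?r' ?L f] finite_E by simp
qed

lemma in_R_minor_dual_parallel_uniform:
  assumes "C \<subseteq> E" "D \<subseteq> E" "C \<inter> D = {}" "C \<union> D \<noteq> {}"
  shows "in_R (delete (contract (dual (parallel_uniform E {} f 2)) C) D)"
proof -
  let ?r = "min 2 (num_classes (E - C) {} f)"
  let ?L = "f -` f ` D" and ?r' = "?r - num_classes D {} f"
  have "finite (E - C)" "D \<subseteq> E - C"
    using finite_E assms(2,3) by auto
  have del: "delete (parallel_uniform E {} f 2) C = parallel_uniform (E - C) {} f ?r"
    using delete_parallel_uniform[OF finite_E two_classes] .
  have r: "?r \<le> num_classes (E - C) {} f"
    by simp
  have "delete (contract (dual (parallel_uniform E {} f 2)) C) D =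
      dual (contract (delete (parallel_uniform E {} f 2) C) D)"
    by (simp add: contract_dual[OF bases_parallel_uniform_Pow] delete_dual)
  also have "\<dots> = dual (parallel_uniform (E - C - D) ?L f ?r')"
    unfolding del using contract_parallel_uniform[OF \<open>finite (E - C)\<close> r \<open>D \<subseteq> E - C\<close>] by simp
  finally have minor: "delete (contract (dual (parallel_uniform E {} f 2)) C) D =
      dual (parallel_uniform (E - C - D) ?L f ?r')" .
  have r': "?r' \<le> num_classes (E - C - D) ?L f"
    using num_classes_contract_ge[OF \<open>finite (E - C)\<close> r \<open>D \<subseteq> E - C\<close>] by simp
  have "R_parameters (E - C - D) ?L f ?r'"
  proof (cases "D = {}")
    case True
    then show ?thesis
      using R_parameters_restriction[of "E - C"] assms(1,4) by auto
  next
    case False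
    then have "1 \<le> num_classes D {} f"
      using assms(2) finite_subset[OF _ finite_E] unfolding num_classes_def
      by (simp add: Suc_leI card_gt_0_iff)
    then show ?thesis
      by (intro R_parameters_rank_le_one) linarith
  qed
  then show ?thesis
    unfolding minor using in_R_parallel_uniform[OF _ r'] finite_E by simp
qed

lemma excluded_minor_R_parallel_uniform_iff:
  "excluded_minor_R (parallel_uniform E {} f 2) \<longleftrightarrow> \<not> in_R (parallel_uniform E {} f 2)"
  "excluded_minor_R (dual (parallel_uniform E {} f 2)) \<longleftrightarrow> \<not> in_R (dual (parallel_uniform E {} f 2))"
proof -
  have "in_R N" if minor: "proper_minor N (parallel_uniform E {} f 2)" for N
  proof -
    obtain C D where CD: "C \<subseteq> E" "D \<subseteq> E" "C \<inter> D = {}" "C \<union> D \<noteq> {}"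
      and N: "N = delete (contract (parallel_uniform E {} f 2) C) D"
      using minor unfolding proper_minor_def ground_parallel_uniform by blast
    show ?thesis
      unfolding N by (rule in_R_minor_parallel_uniform[OF CD])
  qed
  moreover have "in_R N" if minor: "proper_minor N (dual (parallel_uniform E {} f 2))" for N
  proof -
    obtain C D where CD: "C \<subseteq> E" "D \<subseteq> E" "C \<inter> D = {}" "C \<union> D \<noteq> {}"
      and N: "N = delete (contract (dual (parallel_uniform E {} f 2)) C) D"
      using minor unfolding proper_minor_def ground_dual ground_parallel_uniform by blast
    show ?thesis
      unfolding N by (rule in_R_minor_dual_parallel_uniform[OF CD])
  qed
  ultimately show
    "excluded_minor_R (parallel_uniform E {} f 2) \<longleftrightarrow> \<not> in_R (parallel_uniform E {} f 2)"
    "excluded_minor_R (dual (parallel_uniform E {} f 2)) \<longleftrightarrow> \<not> in_R (dual (parallel_uniform E {} f 2))"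
    unfolding excluded_minor_R_def
    using is_matroid_parallel_uniform[OF finite_E two_classes]
      is_matroid_dual_parallel_uniform[OF finite_E two_classes]
    by simp_all
qed

end

section \<open>Matroids outside the class R\<close>

lemma even_card_symdiff:
  assumes "finite A" "finite B" "even (card A)" "even (card B)"
  shows "even (card (sym_diff A B))"
proof -
  have "card (sym_diff A B) = card (A - B) + card (B - A)"
    using assms(1,2) by (intro card_Un_disjoint) auto
  moreover have "card A = card (A \<inter> B) + card (A - B)"
    using card_Int_Diff[OF assms(1)] .
  moreover have "card B = card (A \<inter> B) + card (B - A)"
    using card_Int_Diff[OF assms(2), of A] by (simp add: Int_commute)
  ultimately show ?thesis
    using assms(3,4) by presburger
qed

lemma even_card_of_circuit:
  assumes "\<And>I. I \<subseteq> ground N \<Longrightarrow> indep N I \<longleftrightarrow> gf2_indep phi I" "circuit N C"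
  shows "even (card {e\<in>C. phi e k})"
proof -
  have C: "C \<subseteq> ground N" "\<not> indep N C" "\<forall>x\<in>C. indep N (C - {x})"
    using assms(2) unfolding circuit_def by auto
  then have "\<not> gf2_indep phi C"
    using assms(1) by simp
  then obtain S where S: "S \<subseteq> C" "S \<noteq> {}" and even: "\<And>k. even (card {e\<in>S. phi e k})"
    unfolding gf2_indep_def by blast
  have "S = C"
  proof (rule ccontr)
    assume "S \<noteq> C"
    then obtain x where "x \<in> C" "x \<notin> S"
      using S by blast
    then have "gf2_indep phi (C - {x})" "S \<subseteq> C - {x}"
      using assms(1)[of "C - {x}"] C S by auto
    then obtain k where "odd (card {e\<in>S. phi e k})"
      using gf2_indepD S(2) by blast
    then show False
      using even by simp
  qed
  then show ?thesis
    using even by simp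
qed

lemma binary_circuit_symdiff_dependent:
  assumes "binary N" "finite (ground N)" "circuit N C1" "circuit N C2" "C1 \<noteq> C2"
  shows "\<not> indep N (sym_diff C1 C2)"
proof
  assume "indep N (sym_diff C1 C2)"
  obtain phi where phi: "\<And>I. I \<subseteq> ground N \<Longrightarrow> indep N I \<longleftrightarrow> gf2_indep phi I"
    using assms(1) unfolding binary_def by blast
  have "C1 \<subseteq> ground N" "C2 \<subseteq> ground N"
    using assms(3,4) unfolding circuit_def by auto
  then have "gf2_indep phi (sym_diff C1 C2)" "finite C1" "finite C2"
    using phi[of "sym_diff C1 C2"] \<open>indep N (sym_diff C1 C2)\<close> assms(2) finite_subset by auto
  moreover have "sym_diff C1 C2 \<noteq> {}"
    using assms(5) by blast
  ultimately obtain k where "odd (card {e\<in>sym_diff C1 C2. phi e k})"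
    using gf2_indepD by blast
  moreover have "{e\<in>sym_diff C1 C2. phi e k} =
      ({e\<in>C1. phi e k} - {e\<in>C2. phi e k}) \<union> ({e\<in>C2. phi e k} - {e\<in>C1. phi e k})"
    by auto
  moreover have "even (card (({e\<in>C1. phi e k} - {e\<in>C2. phi e k}) \<union> ({e\<in>C2. phi e k} - {e\<in>C1. phi e k})))"
    using \<open>finite C1\<close> \<open>finite C2\<close>
    by (intro even_card_symdiff even_card_of_circuit[OF phi assms(3)] even_card_of_circuit[OF phi assms(4)])
      auto
  ultimately show False
    by simp
qed

definition indep_avoiding :: "'a matroid \<Rightarrow> 'a set \<Rightarrow> 'a set \<Rightarrow> bool" where
  "indep_avoiding M H X \<longleftrightarrow> (\<exists>B\<in>bases M - {H}. X \<subseteq> B)"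

lemma indep_avoiding_of_two_bases:
  "B1 \<in> bases M \<Longrightarrow> B2 \<in> bases M \<Longrightarrow> B1 \<noteq> B2 \<Longrightarrow> X \<subseteq> B1 \<Longrightarrow> X \<subseteq> B2 \<Longrightarrow> indep_avoiding M H X"
  unfolding indep_avoiding_def by (cases "B1 = H") auto

lemma indep_avoiding_subset: "indep_avoiding M H Y \<Longrightarrow> X \<subseteq> Y \<Longrightarrow> indep_avoiding M H X"
  unfolding indep_avoiding_def by blast

lemma in_R_obtains_binary:
  assumes "in_R M"
  obtains N H where "binary N" "ground N = ground M" "H \<in> bases M"
    "bases M - {H} \<subseteq> bases N" "bases N \<subseteq> bases M"
proof -
  consider "is_matroid M" "binary M"
    | N H where "binary N" "circuit_hyperplane N H" "M = relax N H"
    using assms unfolding in_R_def by blast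
  then show thesis
  proof cases
    case 1
    then obtain H where "H \<in> bases M"
      unfolding is_matroid_def by blast
    then show thesis
      using that[of M H] 1 by blast
  next
    case 2
    then have "H \<notin> bases N"
      unfolding circuit_hyperplane_def circuit_def indep_def by blast
    moreover have "ground N = ground M" "bases M = insert H (bases N)"
      using 2 by (simp_all add: bases_relax)
    ultimately show thesis
      using that[of N H] 2(1) by blast
  qed
qed

lemma not_in_R_of_circuit_pairs:
  assumes "finite (ground M)"
    and pairs: "\<And>H. H \<in> bases M \<Longrightarrow> \<exists>C1 C2. C1 \<subseteq> ground M \<and> C2 \<subseteq> ground M \<and> C1 \<noteq> C2 \<and>
       \<not> indep M C1 \<and> \<not> indep M C2 \<and> (\<forall>x\<in>C1. indep_avoiding M H (C1 - {x})) \<and>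
       (\<forall>x\<in>C2. indep_avoiding M H (C2 - {x})) \<and> indep_avoiding M H (sym_diff C1 C2)"
  shows "\<not> in_R M"
proof
  assume "in_R M"
  then obtain N H where N: "binary N" "ground N = ground M" "H \<in> bases M"
    "bases M - {H} \<subseteq> bases N" "bases N \<subseteq> bases M"
    by (rule in_R_obtains_binary)
  have indep_N: "indep N X" if "indep_avoiding M H X" for X
    using that N(4) unfolding indep_avoiding_def indep_def by blast
  have dep_N: "\<not> indep N X" if "\<not> indep M X" for X
    using that N(5) unfolding indep_def by blast
  obtain C1 C2 where C: "C1 \<subseteq> ground M" "C2 \<subseteq> ground M" "C1 \<noteq> C2" "\<not> indep M C1" "\<not> indep M C2"
    "\<forall>x\<in>C1. indep_avoiding M H (C1 - {x})" "\<forall>x\<in>C2. indep_avoiding M H (C2 - {x})"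
    "indep_avoiding M H (sym_diff C1 C2)"
    using pairs[OF N(3)] by blast
  have "circuit N C1" "circuit N C2"
    unfolding circuit_def using C(1,2,4-7) N(2) indep_N dep_N by simp_all
  then have "\<not> indep N (sym_diff C1 C2)"
    using binary_circuit_symdiff_dependent[OF N(1)] N(2) assms(1) C(3) by simp
  then show False
    using indep_N C(8) by blast
qed

lemma not_in_R_parallel_uniform_rank2:
  assumes "finite E" and four: "\<And>d. d \<in> E \<Longrightarrow> d \<noteq> p \<Longrightarrow> 4 \<le> num_classes (E - {d}) {} f"
  shows "\<not> in_R (parallel_uniform E {} f 2)"
proof (rule not_in_R_of_circuit_pairs)
  let ?M = "parallel_uniform E {} f 2"
  show "finite (ground ?M)"
    using assms(1) by simp
  fix H
  assume "H \<in> bases ?M"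
  then obtain a b where H: "H = {a, b}" "a \<in> E" "b \<in> E" "f a \<noteq> f b"
    unfolding bases_parallel_uniform_2 by blast
  obtain d where d: "d \<in> H" "d \<noteq> p"
    using H by (cases "a = p") auto
  then have "d \<in> E"
    using H by blast
  obtain S where S: "S \<subseteq> E - {d}" "inj_on f S" "card S = 4"
    using parallel_uniform_extend_to_basis[of "E - {d}" "{}" "{}" f 4] four[OF \<open>d \<in> E\<close> d(2)] assms(1)
    by auto
  have card_indep: "card X \<le> 2" if "indep ?M X" for X
    using card_le_of_indep[OF _ bases_parallel_uniform_Pow _ that] assms(1)
    by (auto simp: bases_parallel_uniform)
  have pair: "indep_avoiding ?M H X" if "X \<subseteq> S" "card X = 2" for X
  proof -
    have "X \<in> bases ?M"
      using that S inj_on_subset[OF S(2)] by (auto simp: bases_parallel_uniform)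
    moreover have "X \<noteq> H"
      using that(1) S(1) d(1) by blast
    ultimately show ?thesis
      unfolding indep_avoiding_def by blast
  qed
  have "finite S"
    using S(3) by (simp add: card_ge_0_finite)
  obtain u where "u \<in> S"
    using S(3) by fastforce
  moreover have "card (S - {u}) = 3"
    using \<open>u \<in> S\<close> S(3) \<open>finite S\<close> by simp
  then have "S - {u} \<noteq> {}"
    by (metis card.empty zero_neq_numeral)
  then obtain v where "v \<in> S - {u}"
    by blast
  ultimately have uv: "u \<in> S" "v \<in> S" "u \<noteq> v"
    by auto
  have dep: "\<not> indep ?M (S - {w})" if "w \<in> S" for w
    using that S(3) \<open>finite S\<close> card_indep[of "S - {w}"] by auto
  have del: "indep_avoiding ?M H (S - {w} - {x})" if "w \<in> S" "x \<in> S - {w}" for w x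
  proof (rule pair)
    show "card (S - {w} - {x}) = 2"
      using that S(3) \<open>finite S\<close> by simp
  qed blast
  have "indep_avoiding ?M H {u, v}"
    using uv by (intro pair) auto
  moreover have "sym_diff (S - {u}) (S - {v}) = {u, v}"
    using uv by auto
  moreover have "S - {u} \<noteq> S - {v}"
    using uv by auto
  ultimately show "\<exists>C1 C2. C1 \<subseteq> ground ?M \<and> C2 \<subseteq> ground ?M \<and> C1 \<noteq> C2 \<and>
      \<not> indep ?M C1 \<and> \<not> indep ?M C2 \<and> (\<forall>x\<in>C1. indep_avoiding ?M H (C1 - {x})) \<and>
      (\<forall>x\<in>C2. indep_avoiding ?M H (C2 - {x})) \<and> indep_avoiding ?M H (sym_diff C1 C2)"
    using S(1) uv dep del by (intro exI[of _ "S - {u}"] exI[of _ "S - {v}"]) auto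
qed

lemma not_in_R_uniform:
  assumes "3 \<le> r"
  shows "\<not> in_R (uniform r (r + 2))"
proof (rule not_in_R_of_circuit_pairs)
  let ?M = "uniform r (r + 2)" and ?E = "{0..<r + 2}"
  show "finite (ground ?M)"
    by simp
  have card_indep: "card X \<le> r" if "indep ?M X" for X
    by (rule card_le_of_indep[OF _ _ _ that]) (auto simp: bases_uniform)
  fix H
  assume "H \<in> bases ?M"
  then have H: "H \<subseteq> ?E" "card H = r"
    by (auto simp: bases_uniform)
  have "finite H"
    using finite_subset[OF H(1)] by simp
  obtain T where "T \<subseteq> H" "card T = 3"
    using H(2) assms obtain_subset_with_card_n by metis
  then obtain a b c where abc: "a \<in> H" "b \<in> H" "c \<in> H" "a \<noteq> b" "a \<noteq> c" "b \<noteq> c"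
    unfolding card_3_iff by blast
  have "card (?E - H) = 2"
    using H \<open>finite H\<close> by (simp add: card_Diff_subset)
  then obtain y where y: "y \<in> ?E" "y \<notin> H"
    by (metis Diff_iff card.empty ex_in_conv zero_neq_numeral)
  have basis_avoiding: "indep_avoiding ?M H B" if "B \<subseteq> ?E" "card B = r" "B \<noteq> H" for B
    using that unfolding indep_avoiding_def bases_uniform by blast
  have card_E_minus: "card (?E - {w}) = r + 1" if "w \<in> H" for w
    using that H(1) by auto
  have dep: "\<not> indep ?M (?E - {w})" if "w \<in> H" for w
    using card_indep card_E_minus[OF that] by fastforce
  have del: "indep_avoiding ?M H (?E - {w} - {x})" if "w \<in> H" "x \<in> ?E - {w}" for w x
    using that card_E_minus[OF that(1)] by (intro basis_avoiding) auto
  have "indep_avoiding ?M H (insert y (H - {c}))"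
    using abc y H \<open>finite H\<close> assms by (intro basis_avoiding) auto
  moreover have "sym_diff (?E - {a}) (?E - {b}) \<subseteq> insert y (H - {c})"
    using abc by auto
  ultimately have "indep_avoiding ?M H (sym_diff (?E - {a}) (?E - {b}))"
    by (rule indep_avoiding_subset)
  moreover have "?E - {a} \<noteq> ?E - {b}"
    using abc H(1) by auto
  ultimately show "\<exists>C1 C2. C1 \<subseteq> ground ?M \<and> C2 \<subseteq> ground ?M \<and> C1 \<noteq> C2 \<and>
      \<not> indep ?M C1 \<and> \<not> indep ?M C2 \<and> (\<forall>x\<in>C1. indep_avoiding ?M H (C1 - {x})) \<and>
      (\<forall>x\<in>C2. indep_avoiding ?M H (C2 - {x})) \<and> indep_avoiding ?M H (sym_diff C1 C2)"
    using abc dep del by (intro exI[of _ "?E - {a}"] exI[of _ "?E - {b}"]) auto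
qed

text \<open>The complements of the classes are circuits of the dual; three non-trivial classes and a
  fourth class make two of them survive the removal of any basis.\<close>

lemma not_in_R_dual_parallel_uniform_rank2:
  assumes "finite E" "a \<in> E" "b \<in> E" "c \<in> E" "d \<in> E"
    and "\<not> singleton_class E f a" "\<not> singleton_class E f b" "\<not> singleton_class E f c"
    and "distinct [f a, f b, f c, f d]"
  shows "\<not> in_R (dual (parallel_uniform E {} f 2))"
proof (rule not_in_R_of_circuit_pairs)
  let ?M = "dual (parallel_uniform E {} f 2)" and ?cls = "\<lambda>x. {e \<in> E. f e = f x}"
  show "finite (ground ?M)"
    using assms(1) by simp
  have "{f a, f b} \<subseteq> f ` (E - {})"
    using assms(2,3) by auto
  then have "2 \<le> num_classes E {} f"
    unfolding num_classes_def using assms(1,9) card_mono[of "f ` E" "{f a, f b}"] by auto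
  note indep_iff = indep_dual_parallel_uniform[OF assms(1) this]
  have dep: "\<not> indep ?M (E - ?cls x)" if "x \<in> E" for x
  proof -
    have "f ` (E - (E - ?cls x) - {}) = {f x}"
      using that by auto
    then show ?thesis
      unfolding indep_iff num_classes_def by simp
  qed
  fix H
  have del: "indep_avoiding ?M H (E - ?cls x - {y})"
    if x: "x \<in> E" "\<not> singleton_class E f x" and y: "y \<in> E - ?cls x" for x y
  proof -
    obtain x' where x': "x' \<in> E" "x' \<noteq> x" "f x' = f x"
      using x by (rule non_singleton_classE)
    show ?thesis
    proof (rule indep_avoiding_of_two_bases)
      show "E - {x, y} \<in> bases ?M" "E - {x', y} \<in> bases ?M"
        using x y x' by (auto intro!: dual_basis_parallel_uniform_2I)
      have "x' \<in> E - {x, y}"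
        using x' y by auto
      then show "E - {x, y} \<noteq> E - {x', y}"
        by blast
      show "E - ?cls x - {y} \<subseteq> E - {x, y}" "E - ?cls x - {y} \<subseteq> E - {x', y}"
        using x' by auto
    qed
  qed
  obtain c' where c': "c' \<in> E" "c' \<noteq> c" "f c' = f c"
    using assms(4,8) by (rule non_singleton_classE)
  have "indep_avoiding ?M H (sym_diff (E - ?cls a) (E - ?cls b))"
  proof (rule indep_avoiding_of_two_bases)
    show "E - {c, d} \<in> bases ?M" "E - {c', d} \<in> bases ?M"
      using assms(4,5,9) c' by (auto intro!: dual_basis_parallel_uniform_2I)
    have "c' \<in> E - {c, d}"
      using c' assms(9) by auto
    then show "E - {c, d} \<noteq> E - {c', d}"
      by blast
    show "sym_diff (E - ?cls a) (E - ?cls b) \<subseteq> E - {c, d}"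
      "sym_diff (E - ?cls a) (E - ?cls b) \<subseteq> E - {c', d}"
      using assms(9) c' by auto
  qed
  moreover have "a \<in> E - ?cls b" "a \<notin> E - ?cls a"
    using assms(2,9) by auto
  then have "E - ?cls a \<noteq> E - ?cls b"
    by blast
  ultimately show "\<exists>C1 C2. C1 \<subseteq> ground ?M \<and> C2 \<subseteq> ground ?M \<and> C1 \<noteq> C2 \<and>
      \<not> indep ?M C1 \<and> \<not> indep ?M C2 \<and> (\<forall>x\<in>C1. indep_avoiding ?M H (C1 - {x})) \<and>
      (\<forall>x\<in>C2. indep_avoiding ?M H (C2 - {x})) \<and> indep_avoiding ?M H (sym_diff C1 C2)"
    using dep[OF assms(2)] dep[OF assms(3)] del[OF assms(2,6)] del[OF assms(3,7)]
    by (intro exI[of _ "E - ?cls a"] exI[of _ "E - ?cls b"]) auto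
qed

section \<open>The four excluded minors\<close>

lemma restrictions_four_classes:
  assumes "num_classes E {} f = 4" "singleton_class E f s"
    and at_most_two: "\<And>x y z. x \<in> E \<Longrightarrow> y \<in> E \<Longrightarrow> z \<in> E \<Longrightarrow> f y = f x \<Longrightarrow> f z = f x \<Longrightarrow>
      x = y \<or> x = z \<or> y = z"
    and "finite E" "X \<subset> E"
  shows "num_classes X {} f \<le> 3 \<or> (num_classes X {} f = 4 \<and>
    (\<exists>p q. singleton_class X f p \<and> singleton_class X f q \<and> f p \<noteq> f q))"
proof (cases "num_classes X {} f = 4")
  case True
  have "f ` X = f ` E"
    using True assms(1,4,5) unfolding num_classes_def by (intro card_subset_eq) auto
  then obtain s' where "s' \<in> X" "f s' = f s"
    using assms(2) unfolding singleton_class_def by (metis imageE imageI)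
  then have "s \<in> X"
    using assms(2,5) unfolding singleton_class_def by auto
  obtain c where c: "c \<in> E" "c \<notin> X"
    using assms(5) by blast
  then obtain c' where c': "c' \<in> X" "f c' = f c"
    using \<open>f ` X = f ` E\<close> by (metis imageE imageI)
  have "singleton_class X f c'"
    unfolding singleton_class_def
  proof (intro conjI ballI impI)
    fix e
    assume "e \<in> X" "f e = f c'"
    then show "e = c'"
      using at_most_two[of c e c'] c c' assms(5) by auto
  qed (rule c'(1))
  moreover have "singleton_class X f s"
    using assms(2,5) \<open>s \<in> X\<close> unfolding singleton_class_def by blast
  moreover have "f s \<noteq> f c'"
    using assms(2) c c' \<open>s \<in> X\<close> unfolding singleton_class_def by auto
  ultimately show ?thesis
    using True by blast
next
  case False
  have "num_classes X {} f \<le> num_classes E {} f"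
    unfolding num_classes_def using assms(4,5) by (intro card_mono) auto
  then show ?thesis
    using False assms(1) by simp
qed

lemma restrictions_U25:
  assumes "X \<subset> {0..<5}"
  shows "num_classes X {} id \<le> 3 \<or> (num_classes X {} id = 4 \<and>
    (\<exists>p q. singleton_class X id p \<and> singleton_class X id q \<and> id p \<noteq> id q))"
proof (cases "card X = 4")
  case True
  then obtain T where "T \<subseteq> X" "card T = 2"
    using obtain_subset_with_card_n by (metis numeral_le_iff semiring_norm(69) order.refl
        le_add2 numeral_Bit0 numeral_plus_numeral)
  then obtain p q where "p \<in> X" "q \<in> X" "p \<noteq> q"
    unfolding card_2_iff by blast
  then show ?thesis
    using True unfolding num_classes_def singleton_class_def by auto
next
  case False
  have "card X < 5"
    using psubset_card_mono[OF _ assms] by simp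
  then show ?thesis
    using False unfolding num_classes_def by simp
qed

lemma K_eq: "K = parallel_uniform {0..<7} {} Kcls 2"
proof (rule matroid_eqI)
  show "ground K = ground (parallel_uniform {0..<7} {} Kcls 2)"
    by (simp add: K_def ground_def[of "(_, _)"])
  show "bases K = bases (parallel_uniform {0..<7} {} Kcls 2)"
    unfolding bases_parallel_uniform_2 by (simp add: K_def bases_def[of "(_, _)"])
qed

lemma Kcls_eq_iff:
  "Kcls x = Kcls y \<longleftrightarrow> x = y \<or> {x, y} = {0, 4} \<or> {x, y} = {1, 5} \<or> {x, y} = {2, 6}"
  unfolding Kcls_def by (auto simp: doubleton_eq_iff)

lemma Kcls_image: "Kcls ` {0..<7} = {0..<4}"
proof (intro set_eqI iffI)
  fix c :: nat
  assume "c \<in> {0..<4}"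
  then have "Kcls c = c" "c \<in> {0..<7}"
    unfolding Kcls_def by auto
  then show "c \<in> Kcls ` {0..<7}"
    by (metis imageI)
qed (auto simp: Kcls_def)

lemma num_classes_K_remove:
  assumes "d \<noteq> 3"
  shows "num_classes ({0..<7} - {d}) {} Kcls = 4"
proof -
  have "Kcls ` ({0..<7} - {d}) = {0..<4}"
  proof (intro set_eqI iffI)
    fix c :: nat
    assume "c \<in> {0..<4}"
    then have "c = 0 \<or> c = 1 \<or> c = 2 \<or> c = 3"
      by auto
    then have "c \<in> {0..<7} - {d} \<and> Kcls c = c \<or> c + 4 \<in> {0..<7} - {d} \<and> Kcls (c + 4) = c"
      using assms by (auto simp: Kcls_def)
    then show "c \<in> Kcls ` ({0..<7} - {d})"
      by (metis imageI)
  qed (use Kcls_image in auto)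
  then show ?thesis
    unfolding num_classes_def by simp
qed

lemma restrictions_K:
  assumes "X \<subset> {0..<7}"
  shows "num_classes X {} Kcls \<le> 3 \<or> (num_classes X {} Kcls = 4 \<and>
    (\<exists>p q. singleton_class X Kcls p \<and> singleton_class X Kcls q \<and> Kcls p \<noteq> Kcls q))"
proof (rule restrictions_four_classes[OF _ _ _ _ assms])
  show "num_classes {0..<7} {} Kcls = 4"
    by (simp add: num_classes_def Kcls_image)
  show "singleton_class {0..<7} Kcls 3"
    unfolding singleton_class_def Kcls_eq_iff by (auto simp: doubleton_eq_iff)
  show "x = y \<or> x = z \<or> y = z" if "Kcls y = Kcls x" "Kcls z = Kcls x" for x y z
    using that unfolding Kcls_eq_iff by (auto simp: doubleton_eq_iff)
qed simp

theorem lemma2p10: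
  shows "excluded_minor_R (uniform 2 5) \<and> excluded_minor_R (uniform 3 5) \<and>
         excluded_minor_R K \<and> excluded_minor_R Kstar"
proof -
  have U: "uniform 2 5 = parallel_uniform {0..<5} {} id 2"
    "uniform 3 5 = dual (parallel_uniform {0..<5} {} id 2)"
    using uniform_eq_parallel_uniform dual_uniform[of 2 5] by simp_all
  have K: "K = parallel_uniform {0..<7} {} Kcls 2" "Kstar = dual (parallel_uniform {0..<7} {} Kcls 2)"
    using K_eq by (simp_all add: Kstar_def)
  have classes: "2 \<le> num_classes {0..<5} {} id" "2 \<le> num_classes {0..<7} {} Kcls"
    by (simp_all add: num_classes_def Kcls_image)
  note U_iff = excluded_minor_R_parallel_uniform_iff[OF finite_atLeastLessThan classes(1) restrictions_U25]
  note K_iff = excluded_minor_R_parallel_uniform_iff[OF finite_atLeastLessThan classes(2) restrictions_K]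
  have non_singleton: "\<not> singleton_class {0..<7} Kcls x" if "x < 3" for x
    using that by (intro not_singleton_classI[where y = "x + 4"]) (auto simp: Kcls_def)
  have "\<not> in_R (parallel_uniform {0..<5} {} id 2)"
    by (rule not_in_R_parallel_uniform_rank2[where p = 0]) (simp_all add: num_classes_def)
  moreover have "\<not> in_R (dual (parallel_uniform {0..<5} {} id 2))"
    using not_in_R_uniform[of 3] U(2) by simp
  moreover have "\<not> in_R (parallel_uniform {0..<7} {} Kcls 2)"
    by (rule not_in_R_parallel_uniform_rank2[where p = 3]) (simp_all add: num_classes_K_remove)
  moreover have "\<not> in_R (dual (parallel_uniform {0..<7} {} Kcls 2))"
    by (intro not_in_R_dual_parallel_uniform_rank2[where a = 0 and b = 1 and c = 2 and d = 3])
      (simp_all add: non_singleton Kcls_def)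
  ultimately show ?thesis
    unfolding U K using U_iff K_iff by simp
qed

end
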